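(* Let $f:\mathbb{R}^n\times\mathbb{R}^m\to\mathbb{R}$ and $g:\mathbb{R}^n\times\mathbb{R}^m\to\mathbb{R}^p$ belong to $\mathcal{C}^2(\mathbb{R}^n\times\mathbb{R}^m)$. Assume that for every $x\in\mathbb{R}^n$, $f(x,\cdot)$ is strictly convex, $g(x,\cdot)$ is convex (componentwise), and the problem $\min_{u\in\mathbb{R}^m} f(x,u)$ subject to $g(x,u)\le 0$ has at least one minimizer; let $u^*(x)$ denote the (unique) minimizer. Suppose local compact feasibility holds at every $x\in\mathbb{R}^n$, and let $F:\mathbb{R}^n\times\mathbb{R}^m\to\mathbb{R}^n$ be locally Lipschitz. Then for every $x\in\mathbb{R}^n$ there exists $\delta_x>0$ such that $\dot y=F(y,u^*(y))$ has at least one Filippov solution $y:(-\delta_x,\delta_x)\to\mathbb{R}^n$ with $y(0)=x$.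
   Context: Local compact feasibility holds at $x$ if there exist a compact $K\subset\mathbb{R}^m$ and $\delta>0$ such that for all $y$ with $\|y-x\|<\delta$ there is $u\in K$ with $g(y,u)\le 0$. The Filippov set-valued map of $\dot y=F(y,u^*(y))$ is $\mathcal{F}(x)=\bigcap_{\delta>0}\bigcap_{\mu(S)=0}\overline{\mathrm{co}}\{F(y,u^*(y)) : \|y-x\|\le\delta,\ y\notin S\}$, where $\mu$ is Lebesgue measure and $\overline{\mathrm{co}}$ the closed convex hull; a Filippov solution on an interval $I$ is an absolutely continuous $y:I\to\mathbb{R}^n$ with $\dot y(t)\in\mathcal{F}(y(t))$ for almost every $t\in I$. *)

theory Defs
  imports "HOL-Analysis.Analysis"
begin

definition C2 :: "('a::real_normed_vector \<Rightarrow> 'b::real_normed_vector) \<Rightarrow> bool" where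
  "C2 f \<longleftrightarrow> (\<exists>Df D2f.
      (\<forall>x. (f has_derivative blinfun_apply (Df x)) (at x)) \<and>
      (\<forall>x. (Df has_derivative blinfun_apply (D2f x)) (at x)) \<and>
      continuous_on UNIV D2f)"

definition strictly_convex_on :: "'a::real_vector set \<Rightarrow> ('a \<Rightarrow> real) \<Rightarrow> bool" where
  "strictly_convex_on S h \<longleftrightarrow> convex S \<and>
     (\<forall>x\<in>S. \<forall>y\<in>S. \<forall>t::real. x \<noteq> y \<and> 0 < t \<and> t < 1 \<longrightarrow>
        h ((1 - t) *\<^sub>R x + t *\<^sub>R y) < (1 - t) * h x + t * h y)"

definition feasible :: "('n \<times> 'm \<Rightarrow> real^'p) \<Rightarrow> 'n \<Rightarrow> 'm \<Rightarrow> bool" where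
  "feasible g x u \<longleftrightarrow> (\<forall>i. g (x, u) $ i \<le> 0)"

definition is_minimizer :: "('n \<times> 'm \<Rightarrow> real) \<Rightarrow> ('n \<times> 'm \<Rightarrow> real^'p) \<Rightarrow> 'n \<Rightarrow> 'm \<Rightarrow> bool" where
  "is_minimizer f g x u \<longleftrightarrow> feasible g x u \<and> (\<forall>v. feasible g x v \<longrightarrow> f (x, u) \<le> f (x, v))"

definition ustar :: "('n \<times> 'm \<Rightarrow> real) \<Rightarrow> ('n \<times> 'm \<Rightarrow> real^'p) \<Rightarrow> 'n \<Rightarrow> 'm" where
  "ustar f g x = (THE u. is_minimizer f g x u)"

definition local_compact_feasibility ::
    "('n::real_normed_vector \<times> 'm::real_normed_vector \<Rightarrow> real^'p) \<Rightarrow> 'n \<Rightarrow> bool" where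
  "local_compact_feasibility g x \<longleftrightarrow>
     (\<exists>K. compact K \<and> (\<exists>\<delta>>0. \<forall>y. norm (y - x) < \<delta> \<longrightarrow> (\<exists>u\<in>K. feasible g y u)))"

definition locally_lipschitz :: "('a::metric_space \<Rightarrow> 'b::metric_space) \<Rightarrow> bool" where
  "locally_lipschitz h \<longleftrightarrow> (\<forall>z. \<exists>r>0. \<exists>L. L-lipschitz_on (ball z r) h)"

definition Filippov :: "('n::euclidean_space \<Rightarrow> 'n) \<Rightarrow> 'n \<Rightarrow> 'n set" where
  "Filippov G x = (\<Inter>\<delta>\<in>{0<..}. \<Inter>S\<in>null_sets lebesgue.
      closure (convex hull {G y | y. norm (y - x) \<le> \<delta> \<and> y \<notin> S}))"

definition absolutely_continuous_fun :: "real set \<Rightarrow> (real \<Rightarrow> 'a::real_normed_vector) \<Rightarrow> bool" where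
  "absolutely_continuous_fun I y \<longleftrightarrow>
     (\<forall>\<epsilon>>0. \<exists>d>0. \<forall>(N::nat) a b.
        (\<forall>k<N. a k \<le> b k \<and> {a k..b k} \<subseteq> I) \<and>
        (\<forall>k<N. \<forall>l<N. k \<noteq> l \<longrightarrow> {a k<..<b k} \<inter> {a l<..<b l} = {}) \<and>
        (\<Sum>k<N. b k - a k) < d
        \<longrightarrow> (\<Sum>k<N. norm (y (b k) - y (a k))) < \<epsilon>)"

definition Filippov_solution :: "('n::euclidean_space \<Rightarrow> 'n) \<Rightarrow> real set \<Rightarrow> (real \<Rightarrow> 'n) \<Rightarrow> bool" where
  "Filippov_solution G I y \<longleftrightarrow> absolutely_continuous_fun I y \<and>
     (AE t in lebesgue. t \<in> I \<longrightarrow>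
        (\<exists>v. (y has_vector_derivative v) (at t) \<and> v \<in> Filippov G (y t)))"

end

theory Submission
  imports Defs "HOL-Complex_Analysis.Great_Picard"
begin

(* Although the minimizer u*(z) need not depend continuously on z, it is locally bounded: if u*(z_n)
   escaped to infinity along z_n -> x, the segments from feasible points k_n of the compact set K to
   u*(z_n) would, after normalization, converge to a ray k0 + tau d (|d| = 1) on which the constraints
   hold and f(x, _) stays bounded. Recession directions of closed convex sets do not depend on the
   base point, so u*(x) + d would be a second minimizer, contradicting uniqueness.

   Hence the vector field y |-> F(y, u*(y)) is bounded near x. Euler polygons of any selection of its
   Filippov map are equi-Lipschitz; by Arzela-Ascoli a subsequence converges to a Lipschitz function
   whose derivative, by a separating hyperplane argument, lies in the Krasovskii regularization of the
   Filippov map, which is contained in the Filippov map itself. Lipschitz functions are absolutely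
   continuous and, by Lebesgue's theorem, differentiable almost everywhere; the latter is proved with
   the Vitali covering theorem, which shows that the points where the difference quotients of a
   monotone function oscillate across two rationals r < s form a negligible set. *)

section \<open>Local boundedness of the parametric minimizer\<close>

lemma C2_imp_continuous_on:
  assumes "C2 h"
  shows "continuous_on UNIV h"
proof -
  obtain Df where "\<And>x. (h has_derivative blinfun_apply (Df x)) (at x)"
    using assms unfolding C2_def by blast
  then show ?thesis
    by (meson continuous_at_imp_continuous_on has_derivative_continuous)
qed

lemma locally_lipschitz_imp_continuous_on:
  assumes "locally_lipschitz h"
  shows "continuous_on UNIV h"
proof -
  have "isCont h z" for z
  proof -
    obtain r L where "0 < r" "L-lipschitz_on (ball z r) h"
      using assms unfolding locally_lipschitz_def by blast
    then show ?thesis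
      using lipschitz_on_continuous_on[of L "ball z r" h]
      by (simp add: continuous_on_eq_continuous_at)
  qed
  then show ?thesis
    by (simp add: continuous_at_imp_continuous_on)
qed

lemma strictly_convex_on_imp_convex_on:
  assumes "strictly_convex_on S h"
  shows "convex_on S h"
proof (rule convex_onI)
  fix t :: real and a b assume "0 < t" "t < 1" "a \<in> S" "b \<in> S"
  then show "h ((1 - t) *\<^sub>R a + t *\<^sub>R b) \<le> (1 - t) * h a + t * h b"
    using assms unfolding strictly_convex_on_def
    by (cases "a = b") (auto simp: less_imp_le simp flip: scaleR_add_left distrib_right)
qed (use assms in \<open>simp add: strictly_convex_on_def\<close>)

lemma convex_sublevel_set:
  assumes "convex_on S \<phi>"
  shows "convex {u \<in> S. \<phi> u \<le> c}"
proof (rule convexI)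
  fix u v and s t :: real
  assume uv: "u \<in> {u \<in> S. \<phi> u \<le> c}" "v \<in> {u \<in> S. \<phi> u \<le> c}"
    and st: "0 \<le> s" "0 \<le> t" "s + t = 1"
  have "convex S"
    using assms by (simp add: convex_on_def)
  with uv st have "s *\<^sub>R u + t *\<^sub>R v \<in> S"
    by (simp add: convexD)
  moreover have "\<phi> (s *\<^sub>R u + t *\<^sub>R v) \<le> s * \<phi> u + t * \<phi> v"
    using convex_onD[OF assms, of t u v] uv st by (simp add: eq_diff_eq[symmetric] del: eq_diff_eq)
  moreover have "s * \<phi> u + t * \<phi> v \<le> s * c + t * c"
    using uv st by (intro add_mono mult_left_mono) auto
  ultimately show "s *\<^sub>R u + t *\<^sub>R v \<in> {u \<in> S. \<phi> u \<le> c}"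
    using st by (simp flip: distrib_right)
qed

lemma convex_feasible:
  assumes "\<And>i. convex_on UNIV (\<lambda>u. g (x, u) $ i)"
  shows "convex {u. feasible g x u}"
proof -
  have "{u. feasible g x u} = (\<Inter>i. {u \<in> UNIV. g (x, u) $ i \<le> 0})"
    by (auto simp: feasible_def)
  then show ?thesis
    using convex_sublevel_set[OF assms] by (simp add: convex_INT)
qed

lemma is_minimizer_unique:
  assumes strict: "strictly_convex_on UNIV (\<lambda>u. f (x, u))"
    and "\<And>i. convex_on UNIV (\<lambda>u. g (x, u) $ i)"
    and u: "is_minimizer f g x u" and v: "is_minimizer f g x v"
  shows "u = v"
proof (rule ccontr)
  assume "u \<noteq> v"
  define w where "w = (1 - 1 / 2) *\<^sub>R u + (1 / 2 :: real) *\<^sub>R v"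
  have "feasible g x w"
    using convexD[OF convex_feasible[OF assms(2)], of u v "1 - 1 / 2" "1 / 2"] u v
    by (simp add: w_def is_minimizer_def)
  then have "f (x, u) \<le> f (x, w)"
    using u by (simp add: is_minimizer_def)
  also have "f (x, w) < (1 - 1 / 2) * f (x, u) + (1 / 2) * f (x, v)"
  proof -
    have strict_ineq: "f (x, (1 - t) *\<^sub>R a + t *\<^sub>R b) < (1 - t) * f (x, a) + t * f (x, b)"
      if "a \<noteq> b" "0 < t" "t < 1" for a b t
      using strict that unfolding strictly_convex_on_def by blast
    show ?thesis
      unfolding w_def by (rule strict_ineq) (use \<open>u \<noteq> v\<close> in simp_all)
  qed
  also have "\<dots> = f (x, u)"
  proof -
    have "f (x, u) = f (x, v)"
      using u v unfolding is_minimizer_def by (blast intro: antisym)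
    then show ?thesis
      by simp
  qed
  finally show False
    by simp
qed

lemma is_minimizer_ustar:
  assumes "strictly_convex_on UNIV (\<lambda>u. f (x, u))" "\<And>i. convex_on UNIV (\<lambda>u. g (x, u) $ i)"
    and "\<exists>u. is_minimizer f g x u"
  shows "is_minimizer f g x (ustar f g x)"
  unfolding ustar_def using assms is_minimizer_unique by (metis theI)

lemma closed_convex_recession:
  fixes C :: "'a::real_normed_vector set"
  assumes "closed C" "convex C" and ray: "\<And>\<tau>. 0 \<le> \<tau> \<Longrightarrow> k + \<tau> *\<^sub>R d \<in> C"
    and "u \<in> C" "0 \<le> \<tau>"
  shows "u + \<tau> *\<^sub>R d \<in> C"
proof -
  define p where "p s = (1 - s) *\<^sub>R u + s *\<^sub>R k + \<tau> *\<^sub>R d" for s :: real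
  have "p s \<in> C" if "0 < s" "s < 1" for s
  proof -
    have "(1 - s) *\<^sub>R u + s *\<^sub>R (k + (\<tau> / s) *\<^sub>R d) \<in> C"
      using that \<open>0 \<le> \<tau>\<close> by (intro convexD[OF \<open>convex C\<close> \<open>u \<in> C\<close> ray]) auto
    then show ?thesis
      using that by (simp add: p_def scaleR_add_right add.assoc)
  qed
  then have "eventually (\<lambda>s. p s \<in> C) (at_right 0)"
    unfolding eventually_at_right_field by (intro exI[of _ 1]) auto
  moreover have "(p \<longlongrightarrow> p 0) (at_right 0)"
    unfolding p_def by (intro tendsto_intros)
  ultimately have "p 0 \<in> C"
    using \<open>closed C\<close> by (intro Lim_in_closed_set) auto
  then show ?thesis
    by (simp add: p_def)
qed

lemma closed_convex_fibres_recession: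
  fixes A :: "('a::topological_space \<times> 'b::real_normed_vector) set"
  assumes "closed A" and fibres: "\<And>z. convex {u. (z, u) \<in> A}"
    and "\<And>n. (z n, k n) \<in> A" "\<And>n. (z n, u n) \<in> A"
    and "z \<longlonglongrightarrow> x" "k \<longlonglongrightarrow> k0" "(\<lambda>n. (1 / norm (u n - k n)) *\<^sub>R (u n - k n)) \<longlonglongrightarrow> d"
    and far: "filterlim (\<lambda>n. norm (u n - k n)) at_top sequentially"
    and "0 \<le> \<tau>"
  shows "(x, k0 + \<tau> *\<^sub>R d) \<in> A"
proof -
  define q where "q n = k n + \<tau> *\<^sub>R ((1 / norm (u n - k n)) *\<^sub>R (u n - k n))" for n
  have "eventually (\<lambda>n. \<tau> + 1 \<le> norm (u n - k n)) sequentially"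
    using far by (simp add: filterlim_at_top)
  then have "eventually (\<lambda>n. (z n, q n) \<in> A) sequentially"
  proof eventually_elim
    case (elim n)
    define \<theta> where "\<theta> = \<tau> / norm (u n - k n)"
    have "0 \<le> \<theta>" "\<theta> \<le> 1"
      using elim \<open>0 \<le> \<tau>\<close> by (auto simp: \<theta>_def divide_le_eq_1)
    then have "(1 - \<theta>) *\<^sub>R k n + \<theta> *\<^sub>R u n \<in> {u. (z n, u) \<in> A}"
      using assms(3,4) by (intro convexD[OF fibres]) auto
    moreover have "(1 - \<theta>) *\<^sub>R k n + \<theta> *\<^sub>R u n = q n"
      by (simp add: q_def \<theta>_def algebra_simps)
    ultimately show ?case
      by simp
  qed
  moreover have "(\<lambda>n. (z n, q n)) \<longlonglongrightarrow> (x, k0 + \<tau> *\<^sub>R d)"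
    unfolding q_def using assms(5-7) by (intro tendsto_intros)
  ultimately show ?thesis
    using \<open>closed A\<close> by (intro Lim_in_closed_set) auto
qed

lemma minimizer_no_recession_direction:
  fixes f :: "'a \<times> 'b::real_normed_vector \<Rightarrow> real"
  assumes cont_f: "continuous_on UNIV (\<lambda>u. f (x, u))" and cont_g: "continuous_on UNIV (\<lambda>u. g (x, u))"
    and strict: "strictly_convex_on UNIV (\<lambda>u. f (x, u))"
    and convex_g: "\<And>i. convex_on UNIV (\<lambda>u. g (x, u) $ i)"
    and min: "is_minimizer f g x u0"
    and ray: "\<And>\<tau>. 0 \<le> \<tau> \<Longrightarrow> feasible g x (k + \<tau> *\<^sub>R d) \<and> f (x, k + \<tau> *\<^sub>R d) \<le> c"
  shows "d = 0"
proof -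
  define C where "C = {p. (\<forall>i. g (x, fst p) $ i \<le> 0) \<and> f (x, fst p) \<le> snd p}"
  have "closed C"
    unfolding C_def
    by (intro closed_Collect_conj closed_Collect_all closed_Collect_le continuous_on_compose2[OF cont_f]
        continuous_on_compose2[OF cont_g] continuous_intros) auto
  have "C = epigraph UNIV (\<lambda>u. f (x, u)) \<inter> ({u. feasible g x u} \<times> UNIV)"
    by (auto simp: C_def epigraph_def feasible_def)
  then have "convex C"
    using strictly_convex_on_imp_convex_on[OF strict] convex_feasible[OF convex_g]
    by (simp add: convex_Int convex_epigraphI convex_Times)
  have "(u0, f (x, u0)) + 1 *\<^sub>R (d, 0) \<in> C"
  proof (rule closed_convex_recession[OF \<open>closed C\<close> \<open>convex C\<close>, where k="(k, c)"])
    show "(k, c) + \<tau> *\<^sub>R (d, 0) \<in> C" if "0 \<le> \<tau>" for \<tau>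
      using ray[OF that] by (simp add: C_def feasible_def)
  qed (use min in \<open>auto simp: C_def is_minimizer_def feasible_def\<close>)
  then have "feasible g x (u0 + d)" "f (x, u0 + d) \<le> f (x, u0)"
    by (simp_all add: C_def feasible_def)
  with min have "is_minimizer f g x (u0 + d)"
    by (auto simp: is_minimizer_def)
  with min have "u0 = u0 + d"
    by (rule is_minimizer_unique[OF strict convex_g])
  then show ?thesis
    by simp
qed

lemma compact_unbounded_direction_subsequence:
  fixes k u :: "nat \<Rightarrow> 'b::euclidean_space"
  assumes "compact K" "\<And>n. k n \<in> K" "\<And>n. 0 < norm (u n - k n)"
  obtains r k0 d where "strict_mono r" "(\<lambda>n. k (r n)) \<longlonglongrightarrow> k0"
    "(\<lambda>n. (1 / norm (u (r n) - k (r n))) *\<^sub>R (u (r n) - k (r n))) \<longlonglongrightarrow> d" "norm d = 1"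
proof -
  define p where "p n = (k n, (1 / norm (u n - k n)) *\<^sub>R (u n - k n))" for n
  have "p n \<in> K \<times> sphere 0 1" for n
    using assms(2,3) by (simp add: p_def)
  moreover have "compact (K \<times> sphere (0::'b) 1)"
    using assms(1) by (intro compact_Times) auto
  ultimately obtain l r where l: "l \<in> K \<times> sphere 0 1" "strict_mono r" "(p \<circ> r) \<longlonglongrightarrow> l"
    using compact_imp_seq_compact seq_compactE by metis
  have "(\<lambda>n. k (r n)) \<longlonglongrightarrow> fst l"
    using tendsto_fst[OF l(3)] by (simp add: p_def o_def)
  moreover have "(\<lambda>n. (1 / norm (u (r n) - k (r n))) *\<^sub>R (u (r n) - k (r n))) \<longlonglongrightarrow> snd l"
    using tendsto_snd[OF l(3)] by (simp add: p_def o_def)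
  ultimately show ?thesis
    using that l(1,2) by auto
qed

lemma unbounded_minimizers_recession_ray:
  fixes f :: "'a::euclidean_space \<times> 'b::euclidean_space \<Rightarrow> real" and g :: "'a \<times> 'b \<Rightarrow> real^'p"
  assumes cont_f: "continuous_on UNIV f" and cont_g: "continuous_on UNIV g"
    and strict: "\<And>z. strictly_convex_on UNIV (\<lambda>u. f (z, u))"
    and convex_g: "\<And>z i. convex_on UNIV (\<lambda>u. g (z, u) $ i)"
    and "compact K" "z \<longlonglongrightarrow> x" and k: "\<And>n. k n \<in> K" "\<And>n. feasible g (z n) (k n)" "\<And>n. f (z n, k n) \<le> c"
    and min: "\<And>n. is_minimizer f g (z n) (u n)" and gap: "\<And>n. real n < norm (u n - k n)"
  obtains k0 d where "norm d = 1" "\<And>\<tau>. 0 \<le> \<tau> \<Longrightarrow> feasible g x (k0 + \<tau> *\<^sub>R d) \<and> f (x, k0 + \<tau> *\<^sub>R d) \<le> c"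
proof -
  define A where "A = {p. (\<forall>i. g p $ i \<le> 0) \<and> f p \<le> c}"
  have "closed A"
    unfolding A_def by (intro closed_Collect_conj closed_Collect_all closed_Collect_le
        continuous_on_compose2[OF cont_g] cont_f continuous_intros) auto
  have fibres: "convex {u. (z, u) \<in> A}" for z
  proof -
    have "{u. (z, u) \<in> A} = {u. feasible g z u} \<inter> {u \<in> UNIV. f (z, u) \<le> c}"
      by (auto simp: A_def feasible_def)
    then show ?thesis
      using convex_feasible[OF convex_g]
        convex_sublevel_set[OF strictly_convex_on_imp_convex_on[OF strict]]
      by (simp add: convex_Int)
  qed
  have A_k: "(z n, k n) \<in> A" for n
    using k by (simp add: A_def feasible_def)
  have A_u: "(z n, u n) \<in> A" for n
    using min[of n] A_k[of n] order_trans by (fastforce simp: A_def is_minimizer_def feasible_def)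
  have "0 < norm (u n - k n)" for n
    using gap by (rule le_less_trans[OF of_nat_0_le_iff])
  then obtain r k0 d where r: "strict_mono r" "(\<lambda>n. k (r n)) \<longlonglongrightarrow> k0"
      "(\<lambda>n. (1 / norm (u (r n) - k (r n))) *\<^sub>R (u (r n) - k (r n))) \<longlonglongrightarrow> d" "norm d = 1"
    using compact_unbounded_direction_subsequence[where k=k and u=u, OF \<open>compact K\<close> k(1)] by blast
  have "(\<lambda>n. z (r n)) \<longlonglongrightarrow> x"
    using LIMSEQ_subseq_LIMSEQ[OF \<open>z \<longlonglongrightarrow> x\<close> r(1)] by (simp add: o_def)
  moreover have "filterlim (\<lambda>n. norm (u (r n) - k (r n))) at_top sequentially"
  proof (rule filterlim_at_top_mono[OF filterlim_real_sequentially])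
    have "real n \<le> norm (u (r n) - k (r n))" for n
      using gap[of "r n"] seq_suble[OF r(1), of n] by (simp add: le_less_trans less_imp_le)
    then show "eventually (\<lambda>n. real n \<le> norm (u (r n) - k (r n))) sequentially"
      by simp
  qed
  ultimately have "(x, k0 + \<tau> *\<^sub>R d) \<in> A" if "0 \<le> \<tau>" for \<tau>
    using closed_convex_fibres_recession[OF \<open>closed A\<close> fibres A_k A_u _ r(2,3) _ that] by blast
  with r(4) show ?thesis
    using that by (auto simp: A_def feasible_def)
qed

lemma not_locally_bounded_sequence:
  fixes \<phi> :: "'a::real_normed_vector \<Rightarrow> real"
  assumes far: "\<And>\<rho> R. 0 < \<rho> \<Longrightarrow> \<exists>z\<in>cball x \<rho>. R < \<phi> z" and "0 < \<rho>0"
  obtains zs where "zs \<longlonglongrightarrow> x" "\<And>n. zs n \<in> cball x \<rho>0" "\<And>n. real n + R0 < \<phi> (zs n)"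
proof -
  have "\<exists>z. z \<in> cball x (\<rho>0 / real (Suc n)) \<and> real n + R0 < \<phi> z" for n
    using far[of "\<rho>0 / real (Suc n)" "real n + R0"] \<open>0 < \<rho>0\<close> by auto
  then obtain zs where zs: "\<And>n. zs n \<in> cball x (\<rho>0 / real (Suc n))" "\<And>n. real n + R0 < \<phi> (zs n)"
    by metis
  have "zs n \<in> cball x \<rho>0" for n
  proof -
    have "\<rho>0 / real (Suc n) \<le> \<rho>0 / 1"
      using \<open>0 < \<rho>0\<close> by (intro frac_le) auto
    then show ?thesis
      using zs(1)[of n] unfolding mem_cball by linarith
  qed
  moreover have "zs \<longlonglongrightarrow> x"
  proof (rule LIM_zero_cancel, rule Lim_null_comparison)
    show "eventually (\<lambda>n. norm (zs n - x) \<le> \<rho>0 / real (Suc n)) sequentially"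
      using zs(1) by (simp add: dist_norm norm_minus_commute)
    show "(\<lambda>n. \<rho>0 / real (Suc n)) \<longlonglongrightarrow> 0"
      using LIMSEQ_Suc[OF lim_const_over_n[of \<rho>0]] by simp
  qed
  ultimately show ?thesis
    using that zs(2) by blast
qed

lemma minimizers_locally_bounded:
  fixes f :: "'a::euclidean_space \<times> 'b::euclidean_space \<Rightarrow> real" and g :: "'a \<times> 'b \<Rightarrow> real^'p"
    and us :: "'a \<Rightarrow> 'b"
  assumes cont_f: "continuous_on UNIV f" and cont_g: "continuous_on UNIV g"
    and strict: "\<And>z. strictly_convex_on UNIV (\<lambda>u. f (z, u))"
    and convex_g: "\<And>z i. convex_on UNIV (\<lambda>u. g (z, u) $ i)"
    and min: "\<And>z. is_minimizer f g z (us z)"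
    and "local_compact_feasibility g x"
  obtains \<rho> R where "0 < \<rho>" "\<And>z. z \<in> cball x \<rho> \<Longrightarrow> norm (us z) \<le> R"
proof (rule ccontr)
  assume "\<not> thesis"
  with that have far: "\<exists>z\<in>cball x \<rho>. R < norm (us z)" if "0 < \<rho>" for \<rho> R
    using \<open>0 < \<rho>\<close> by (meson not_le)
  obtain K \<delta> where K: "compact K" "0 < \<delta>" "\<And>y. norm (y - x) < \<delta> \<Longrightarrow> \<exists>u\<in>K. feasible g y u"
    using \<open>local_compact_feasibility g x\<close> unfolding local_compact_feasibility_def by blast
  have "compact (f ` (cball x (\<delta> / 2) \<times> K))"
    using K(1) by (intro compact_continuous_image continuous_on_subset[OF cont_f] compact_Times) auto
  then obtain Mf where "\<forall>v\<in>f ` (cball x (\<delta> / 2) \<times> K). norm v \<le> Mf"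
    using compact_imp_bounded[of "f ` (cball x (\<delta> / 2) \<times> K)"] unfolding bounded_iff by blast
  then have Mf: "f (z, u) \<le> Mf" if "z \<in> cball x (\<delta> / 2)" "u \<in> K" for z u
    using that by force
  obtain RK where RK: "\<And>u. u \<in> K \<Longrightarrow> norm u \<le> RK"
    using compact_imp_bounded[OF K(1)] unfolding bounded_iff by blast
  obtain zs where zs: "zs \<longlonglongrightarrow> x" "\<And>n. zs n \<in> cball x (\<delta> / 2)" "\<And>n. real n + RK < norm (us (zs n))"
    using not_locally_bounded_sequence[of x "\<lambda>z. norm (us z)"] far K(2) by (metis half_gt_zero)
  have "\<exists>u. u \<in> K \<and> feasible g (zs n) u" for n
  proof -
    have "norm (zs n - x) < \<delta>"
      using zs(2)[of n] K(2) by (simp add: dist_norm norm_minus_commute)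
    then show ?thesis
      using K(3) by blast
  qed
  then obtain ks where ks: "\<And>n. ks n \<in> K" "\<And>n. feasible g (zs n) (ks n)"
    by metis
  obtain k0 d where "norm d = 1"
      "\<And>\<tau>. 0 \<le> \<tau> \<Longrightarrow> feasible g x (k0 + \<tau> *\<^sub>R d) \<and> f (x, k0 + \<tau> *\<^sub>R d) \<le> Mf"
  proof (rule unbounded_minimizers_recession_ray[where z=zs and k=ks and u="\<lambda>n. us (zs n)" and c=Mf,
        OF cont_f cont_g strict convex_g K(1) zs(1) ks])
    show "f (zs n, ks n) \<le> Mf" for n
      using Mf zs(2) ks(1) by blast
    show "real n < norm (us (zs n) - ks n)" for n
      using zs(3)[of n] RK[OF ks(1)[of n]] norm_triangle_ineq2[of "us (zs n)" "ks n"] by linarith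
  qed (use min that in blast)+
  moreover have "continuous_on UNIV (\<lambda>u. f (x, u))" "continuous_on UNIV (\<lambda>u. g (x, u))"
    by (intro continuous_on_compose2[OF cont_f] continuous_on_compose2[OF cont_g] continuous_intros;
        simp)+
  ultimately show False
    using minimizer_no_recession_direction[OF _ _ strict convex_g min] by fastforce
qed

section \<open>Almost everywhere differentiability of Lipschitz functions\<close>

lemma frequently_slope_obtain_interval:
  fixes h :: "real \<Rightarrow> real"
  assumes "frequently (\<lambda>t. P ((h (x + t) - h x) / t)) (at 0)" and "0 < d"
  obtains a b where "a < b" "b - a < d" "x \<in> {a..b}" "P ((h b - h a) / (b - a))"
proof -
  obtain t where t: "t \<noteq> 0" "\<bar>t\<bar> < d" "P ((h (x + t) - h x) / t)"
    using assms unfolding frequently_def eventually_at dist_real_def by force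
  show ?thesis
  proof (cases "0 < t")
    case True
    then show ?thesis using t by (intro that[of x "x + t"]) auto
  next
    case False
    then have "(h x - h (x + t)) / (x - (x + t)) = (h (x + t) - h x) / t"
      using t(1) by (simp add: divide_simps)
    then show ?thesis using t False by (intro that[of "x + t" x]) auto
  qed
qed

lemma Vitali_covering_intervals:
  fixes E U :: "real set" and P :: "real \<Rightarrow> real \<Rightarrow> bool"
  assumes "open U" "E \<subseteq> U"
    and fine: "\<And>x d. x \<in> E \<Longrightarrow> 0 < d \<Longrightarrow> \<exists>a b. a < b \<and> b - a < d \<and> x \<in> {a..b} \<and> P a b"
  obtains C where "countable C" "\<And>a b. (a, b) \<in> C \<Longrightarrow> a < b \<and> {a..b} \<subseteq> U \<and> P a b"
    "disjoint_family_on (\<lambda>(a, b). {a..b}) C" "negligible (E - (\<Union>(a, b)\<in>C. {a..b}))"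
proof -
  define K where "K = {(a, b). a < b \<and> {a..b} \<subseteq> U \<and> P a b}"
  define c where "c = (\<lambda>(a, b). (a + b) / 2 :: real)"
  define r where "r = (\<lambda>(a, b). (b - a) / 2 :: real)"
  have ball_eq: "cball (c i) (r i) = (\<lambda>(a, b). {a..b}) i" for i
    by (cases i) (simp add: c_def r_def cball_eq_atLeastAtMost field_simps)
  have r_pos: "0 < r i" if "i \<in> K" for i
    using that by (cases i) (simp add: K_def r_def)
  have fine_K: "\<exists>i. i \<in> K \<and> x \<in> cball (c i) (r i) \<and> r i < d" if "x \<in> E" "0 < d" for x d
  proof -
    obtain e where e: "0 < e" "ball x e \<subseteq> U"
      using \<open>x \<in> E\<close> assms(1,2) open_contains_ball by blast
    obtain a b where ab: "a < b" "b - a < min d e" "x \<in> {a..b}" "P a b"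
      using fine[OF \<open>x \<in> E\<close>, of "min d e"] \<open>0 < d\<close> e(1) by auto
    have "{a..b} \<subseteq> ball x e"
      using ab by (auto simp: dist_real_def)
    with ab e show ?thesis
      by (intro exI[of _ "(a, b)"])
         (auto simp: K_def ball_eq r_def c_def dist_real_def abs_le_iff field_simps)
  qed
  obtain C where C: "countable C" "C \<subseteq> K"
      "pairwise (\<lambda>i j. disjnt (cball (c i) (r i)) (cball (c j) (r j))) C"
      "negligible (E - (\<Union>i\<in>C. cball (c i) (r i)))"
    by (rule Vitali_covering_theorem_cballs[OF r_pos fine_K]) blast
  have union_eq: "(\<Union>i\<in>C. cball (c i) (r i)) = (\<Union>(a, b)\<in>C. {a..b})"
    by (simp add: ball_eq)
  show ?thesis
  proof (rule that)
    show "a < b \<and> {a..b} \<subseteq> U \<and> P a b" if "(a, b) \<in> C" for a b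
      using that C(2) by (auto simp: K_def)
    show "disjoint_family_on (\<lambda>(a, b). {a..b}) C"
      using C(3) unfolding pairwise_def disjoint_family_on_def disjnt_def ball_eq by blast
    show "negligible (E - (\<Union>(a, b)\<in>C. {a..b}))"
      using C(4) by (simp only: union_eq)
  qed (rule C(1))
qed

lemma negligible_Diff_Union_open_intervals:
  fixes C :: "(real \<times> real) set"
  assumes "countable C" "negligible (E - (\<Union>(a, b)\<in>C. {a..b}))"
  shows "negligible (E - (\<Union>(a, b)\<in>C. {a<..<b}))"
proof (rule negligible_subset)
  show "negligible ((E - (\<Union>(a, b)\<in>C. {a..b})) \<union> (\<Union>(a, b)\<in>C. {a, b}))"
    using assms by (intro negligible_Un negligible_countable_Union) auto
  show "E - (\<Union>(a, b)\<in>C. {a<..<b}) \<subseteq> (E - (\<Union>(a, b)\<in>C. {a..b})) \<union> (\<Union>(a, b)\<in>C. {a, b})"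
    by (fastforce simp: less_le)
qed

lemma emeasure_disjoint_UN_scaled_le:
  assumes "sets M = sets N" "countable I" "disjoint_family_on A I" "\<And>i. i \<in> I \<Longrightarrow> A i \<in> sets M"
    and le: "\<And>i. i \<in> I \<Longrightarrow> c * emeasure M (A i) \<le> d * emeasure N (A i)"
  shows "c * emeasure M (\<Union>i\<in>I. A i) \<le> d * emeasure N (\<Union>i\<in>I. A i)"
proof -
  have "c * emeasure M (\<Union>i\<in>I. A i) = (\<integral>\<^sup>+i. c * emeasure M (A i) \<partial>count_space I)"
    using assms by (simp add: emeasure_UN_countable nn_integral_cmult)
  also have "\<dots> \<le> (\<integral>\<^sup>+i. d * emeasure N (A i) \<partial>count_space I)"
    using le by (intro nn_integral_mono) auto
  also have "\<dots> = d * emeasure N (\<Union>i\<in>I. A i)"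
    using assms by (simp add: emeasure_UN_countable nn_integral_cmult)
  finally show ?thesis .
qed

lemma interval_measure_Union_intervals_le:
  fixes h :: "real \<Rightarrow> real" and C :: "(real \<times> real) set"
  assumes "mono h" "continuous_on UNIV h" "0 \<le> r"
    and "countable C" "disjoint_family_on (\<lambda>(a, b). {a..b}) C"
    and slope: "\<And>a b. (a, b) \<in> C \<Longrightarrow> a < b \<and> (h b - h a) / (b - a) < r"
  shows "emeasure (interval_measure h) (\<Union>(a, b)\<in>C. {a..b}) \<le>
    ennreal r * emeasure lborel (\<Union>(a, b)\<in>C. {a..b})"
proof -
  have "1 * emeasure (interval_measure h) (\<Union>(a, b)\<in>C. {a..b}) \<le> r * emeasure lborel (\<Union>(a, b)\<in>C. {a..b})"
  proof (rule emeasure_disjoint_UN_scaled_le)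
    fix i assume "i \<in> C"
    obtain a b where i: "i = (a, b)"
      by (cases i)
    with slope[of a b] \<open>i \<in> C\<close> have "a < b" "h b - h a < r * (b - a)"
      by (auto simp: pos_divide_less_eq)
    with i assms(1-3) show "1 * emeasure (interval_measure h) ((\<lambda>(a, b). {a..b}) i) \<le>
        r * emeasure lborel ((\<lambda>(a, b). {a..b}) i)"
      by (simp add: emeasure_interval_measure_Icc monoD ennreal_mult[symmetric] ennreal_leI)
  qed (use assms in auto)
  then show ?thesis
    by simp
qed

lemma interval_measure_Union_intervals_ge:
  fixes h :: "real \<Rightarrow> real" and C :: "(real \<times> real) set"
  assumes "mono h" "continuous_on UNIV h" "0 \<le> s"
    and "countable C" "disjoint_family_on (\<lambda>(a, b). {a..b}) C"
    and slope: "\<And>a b. (a, b) \<in> C \<Longrightarrow> a < b \<and> s < (h b - h a) / (b - a)"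
  shows "ennreal s * emeasure lborel (\<Union>(a, b)\<in>C. {a..b}) \<le>
    emeasure (interval_measure h) (\<Union>(a, b)\<in>C. {a..b})"
proof -
  have "s * emeasure lborel (\<Union>(a, b)\<in>C. {a..b}) \<le> 1 * emeasure (interval_measure h) (\<Union>(a, b)\<in>C. {a..b})"
  proof (rule emeasure_disjoint_UN_scaled_le)
    fix i assume "i \<in> C"
    obtain a b where i: "i = (a, b)"
      by (cases i)
    with slope[of a b] \<open>i \<in> C\<close> have "a < b" "s * (b - a) < h b - h a"
      by (auto simp: pos_less_divide_eq)
    with i assms(1-3) show "s * emeasure lborel ((\<lambda>(a, b). {a..b}) i) \<le>
        1 * emeasure (interval_measure h) ((\<lambda>(a, b). {a..b}) i)"
      by (simp add: emeasure_interval_measure_Icc monoD ennreal_mult[symmetric] ennreal_leI)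
  qed (use assms in auto)
  then show ?thesis
    by simp
qed

lemma slope_oscillation_open_estimate:
  fixes h :: "real \<Rightarrow> real" and E U :: "real set"
  assumes mono: "mono h" and cont: "continuous_on UNIV h" and "0 \<le> r" "0 \<le> s"
    and "open U" "E \<subseteq> U"
    and slow: "\<And>x. x \<in> E \<Longrightarrow> frequently (\<lambda>t. (h (x + t) - h x) / t < r) (at 0)"
    and fast: "\<And>x. x \<in> E \<Longrightarrow> frequently (\<lambda>t. s < (h (x + t) - h x) / t) (at 0)"
  obtains W where "W \<in> sets borel" "W \<subseteq> U" "negligible (E - W)"
    "ennreal s * emeasure lborel W \<le> ennreal r * emeasure lborel U"
proof -
  have fine_slow: "\<exists>a b. a < b \<and> b - a < d \<and> x \<in> {a..b} \<and> (h b - h a) / (b - a) < r"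
    if "x \<in> E" "0 < d" for x d
    by (rule frequently_slope_obtain_interval[OF slow[OF that(1)] that(2)]) blast
  obtain C1 where C1: "countable C1"
      "\<And>a b. (a, b) \<in> C1 \<Longrightarrow> a < b \<and> {a..b} \<subseteq> U \<and> (h b - h a) / (b - a) < r"
      "disjoint_family_on (\<lambda>(a, b). {a..b}) C1" "negligible (E - (\<Union>(a, b)\<in>C1. {a..b}))"
    using Vitali_covering_intervals[OF \<open>open U\<close> \<open>E \<subseteq> U\<close> fine_slow] by metis
  define W1 where "W1 = (\<Union>(a, b)\<in>C1. {a..b})"
  define V where "V = (\<Union>(a, b)\<in>C1. {a<..<b})"
  have "open V" "V \<subseteq> W1" "W1 \<subseteq> U"
    using C1(2) by (auto simp: V_def W1_def)
  have fine_fast: "\<exists>a b. a < b \<and> b - a < d \<and> x \<in> {a..b} \<and> s < (h b - h a) / (b - a)"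
    if "x \<in> E \<inter> V" "0 < d" for x d
    by (rule frequently_slope_obtain_interval[OF fast that(2)]) (use that in blast)+
  obtain C2 where C2: "countable C2"
      "\<And>a b. (a, b) \<in> C2 \<Longrightarrow> a < b \<and> {a..b} \<subseteq> V \<and> s < (h b - h a) / (b - a)"
      "disjoint_family_on (\<lambda>(a, b). {a..b}) C2" "negligible (E \<inter> V - (\<Union>(a, b)\<in>C2. {a..b}))"
    using Vitali_covering_intervals[OF \<open>open V\<close> Int_lower2 fine_fast] by metis
  define W where "W = (\<Union>(a, b)\<in>C2. {a..b})"
  have "W \<subseteq> V"
    using C2(2) by (auto simp: W_def)
  have "negligible (E - W)"
    using negligible_Un[OF negligible_Diff_Union_open_intervals[OF C1(1,4)] C2(4)]
    by (rule negligible_subset) (auto simp: W_def V_def)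
  have "W \<in> sets borel" "W1 \<in> sets borel"
    unfolding W_def W1_def using C1(1) C2(1) by (auto intro: sets.countable_UN')
  have "ennreal s * emeasure lborel W \<le> emeasure (interval_measure h) W"
    unfolding W_def using assms(1-4) C2 by (intro interval_measure_Union_intervals_ge) auto
  also have "\<dots> \<le> emeasure (interval_measure h) W1"
    using \<open>W \<subseteq> V\<close> \<open>V \<subseteq> W1\<close> \<open>W1 \<in> sets borel\<close> by (simp add: emeasure_mono)
  also have "\<dots> \<le> ennreal r * emeasure lborel W1"
    unfolding W1_def using assms(1-4) C1 by (intro interval_measure_Union_intervals_le) auto
  also have "\<dots> \<le> ennreal r * emeasure lborel U"
    using \<open>W1 \<subseteq> U\<close> \<open>open U\<close> by (intro mult_left_mono emeasure_mono) auto
  finally show ?thesis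
    using that \<open>W \<in> sets borel\<close> \<open>W \<subseteq> V\<close> \<open>V \<subseteq> W1\<close> \<open>W1 \<subseteq> U\<close> \<open>negligible (E - W)\<close> by auto
qed

lemma outer_measure_of_le_if_negligible_Diff:
  assumes "W \<in> sets lebesgue" "negligible (E - W)"
  shows "outer_measure_of lebesgue E \<le> emeasure lebesgue W"
proof -
  have null: "E - W \<in> null_sets lebesgue"
    using assms(2) by (simp add: negligible_iff_null_sets)
  have "outer_measure_of lebesgue E \<le> outer_measure_of lebesgue (W \<union> (E - W))"
    by (rule outer_measure_of_mono) auto
  also have "\<dots> = emeasure lebesgue (W \<union> (E - W))"
    using assms(1) null by (intro outer_measure_of_eq sets.Un) auto
  also have "\<dots> = emeasure lebesgue W"
    using assms(1) null by (rule emeasure_Un_null_set)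
  finally show ?thesis .
qed

lemma negligible_if_open_covers_shrink:
  fixes E :: "'a::euclidean_space set"
  assumes "bounded E" "0 < r" "r < s"
    and shrink: "\<And>U. open U \<Longrightarrow> E \<subseteq> U \<Longrightarrow> \<exists>W\<in>sets lebesgue. negligible (E - W) \<and>
      ennreal s * emeasure lebesgue W \<le> ennreal r * emeasure lebesgue U"
  shows "negligible E"
proof -
  obtain a where "E \<subseteq> cbox (- a) a"
    using bounded_subset_cbox_symmetric[OF assms(1)] by blast
  then have "outer_measure_of lebesgue E \<le> emeasure lebesgue (cbox (- a) a)"
    using outer_measure_of_mono[of E "cbox (- a) a" lebesgue] by simp
  then obtain m where m: "0 \<le> m" "outer_measure_of lebesgue E = ennreal m"
    by (cases "outer_measure_of lebesgue E") (auto simp: top_unique emeasure_lborel_cbox_eq)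
  obtain B where B: "B \<in> sets lebesgue" "E \<subseteq> B" "emeasure lebesgue B = ennreal m"
    using outer_measure_of_attain[of E lebesgue] m(2) by auto
  have "s * m \<le> r * m + e" if "0 < e" for e
  proof -
    obtain U where U: "open U" "B \<subseteq> U" "U - B \<in> lmeasurable"
        "emeasure lebesgue (U - B) < ennreal (e / r)"
      using sets_lebesgue_outer_open[OF B(1)] \<open>0 < e\<close> \<open>0 < r\<close> by (metis divide_pos_pos)
    obtain W where W: "W \<in> sets lebesgue" "negligible (E - W)"
        "ennreal s * emeasure lebesgue W \<le> ennreal r * emeasure lebesgue U"
      using shrink[OF U(1)] B(2) U(2) by blast
    have "emeasure lebesgue U \<le> emeasure lebesgue B + emeasure lebesgue (U - B)"
      using B(1) U(2,3) by (metis Un_Diff_cancel Un_absorb1 emeasure_subadditive fmeasurableD)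
    also have "\<dots> \<le> ennreal (m + e / r)"
      using B(3) U(4) m(1) \<open>0 < e\<close> \<open>0 < r\<close> by (simp add: ennreal_plus add_left_mono less_imp_le)
    finally have "ennreal r * emeasure lebesgue U \<le> ennreal r * ennreal (m + e / r)"
      by (rule mult_left_mono) simp
    also have "\<dots> = ennreal (r * m + e)"
      using \<open>0 < r\<close> m(1) \<open>0 < e\<close> by (simp add: ennreal_mult[symmetric] distrib_left)
    finally have "ennreal r * emeasure lebesgue U \<le> ennreal (r * m + e)" .
    moreover have "ennreal (s * m) \<le> ennreal s * emeasure lebesgue W"
      using outer_measure_of_le_if_negligible_Diff[OF W(1,2)] m \<open>0 < r\<close> \<open>r < s\<close>
      by (simp add: ennreal_mult mult_left_mono)
    ultimately show ?thesis
      using W(3) m(1) \<open>0 < r\<close> \<open>0 < e\<close> by (simp add: ennreal_le_iff[symmetric] del: ennreal_le_iff)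
  qed
  then have "s * m \<le> r * m"
    by (rule field_le_epsilon)
  with m(1) \<open>r < s\<close> have "m = 0"
    using mult_strict_right_mono[of r s m] by fastforce
  with B have "B \<in> null_sets lebesgue"
    by (simp add: null_sets_def)
  with B(2) show ?thesis
    using negligible_iff_null_sets negligible_subset by blast
qed

lemma negligible_slope_oscillation:
  fixes h :: "real \<Rightarrow> real" and E :: "real set"
  assumes mono: "mono h" and cont: "continuous_on UNIV h" and "0 < r" "r < s"
    and slow: "\<And>x. x \<in> E \<Longrightarrow> frequently (\<lambda>t. (h (x + t) - h x) / t < r) (at 0)"
    and fast: "\<And>x. x \<in> E \<Longrightarrow> frequently (\<lambda>t. s < (h (x + t) - h x) / t) (at 0)"
  shows "negligible E"
proof (subst negligible_on_intervals, intro allI negligible_if_open_covers_shrink[OF _ \<open>0 < r\<close> \<open>r < s\<close>])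
  fix a b :: real and U assume "open U" "E \<inter> cbox a b \<subseteq> U"
  then obtain W where W: "W \<in> sets borel" "W \<subseteq> U" "negligible (E \<inter> cbox a b - W)"
      "ennreal s * emeasure lborel W \<le> ennreal r * emeasure lborel U"
    using slope_oscillation_open_estimate[OF mono cont _ _ \<open>open U\<close>, of r s "E \<inter> cbox a b"]
      slow fast \<open>0 < r\<close> \<open>r < s\<close> by auto
  then show "\<exists>W\<in>sets lebesgue. negligible (E \<inter> cbox a b - W) \<and>
      ennreal s * emeasure lebesgue W \<le> ennreal r * emeasure lebesgue U"
    using \<open>open U\<close> by (intro bexI[of _ W]) (auto intro: sets_completionI_sets)
qed (simp add: bounded_Int)

lemma Liminf_less_Limsup_rational_gap:
  fixes q :: "'a \<Rightarrow> real"
  assumes "Liminf F (\<lambda>t. ereal (q t)) < Limsup F (\<lambda>t. ereal (q t))"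
  obtains r s where "r \<in> \<rat>" "s \<in> \<rat>" "Liminf F (\<lambda>t. ereal (q t)) < ereal r" "r < s"
    "frequently (\<lambda>t. q t < r) F" "frequently (\<lambda>t. s < q t) F"
proof -
  obtain x y where xy: "Liminf F (\<lambda>t. ereal (q t)) < ereal x" "x < y"
      "ereal y < Limsup F (\<lambda>t. ereal (q t))"
    using assms by (metis ereal_dense2 less_ereal.simps(1))
  obtain r where r: "r \<in> \<rat>" "x < r" "r < y"
    using Rats_dense_in_real[OF \<open>x < y\<close>] by blast
  obtain s where s: "s \<in> \<rat>" "r < s" "s < y"
    using Rats_dense_in_real[OF \<open>r < y\<close>] by blast
  have lo: "Liminf F (\<lambda>t. ereal (q t)) < ereal r" and up: "ereal s < Limsup F (\<lambda>t. ereal (q t))"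
    using xy r(2) s(3) by (meson less_ereal.simps(1) order.strict_trans)+
  have "frequently (\<lambda>t. q t < r) F"
  proof (rule ccontr)
    assume "\<not> frequently (\<lambda>t. q t < r) F"
    then have "ereal r \<le> Liminf F (\<lambda>t. ereal (q t))"
      unfolding not_frequently by (intro Liminf_bounded) (auto elim: eventually_mono)
    with lo show False by simp
  qed
  moreover have "frequently (\<lambda>t. s < q t) F"
  proof (rule ccontr)
    assume "\<not> frequently (\<lambda>t. s < q t) F"
    then have "Limsup F (\<lambda>t. ereal (q t)) \<le> ereal s"
      unfolding not_frequently by (intro Limsup_bounded) (auto elim: eventually_mono)
    with up show False by simp
  qed
  ultimately show ?thesis
    using that r(1) s(1,2) lo by blast
qed

lemma tendsto_if_no_rational_oscillation:
  fixes q :: "'a \<Rightarrow> real"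
  assumes "F \<noteq> bot" and bounded: "eventually (\<lambda>t. 0 \<le> q t \<and> q t \<le> L) F"
    and no_oscillation: "\<And>r s. r \<in> \<rat> \<Longrightarrow> s \<in> \<rat> \<Longrightarrow> 0 < r \<Longrightarrow> r < s \<Longrightarrow>
      frequently (\<lambda>t. q t < r) F \<Longrightarrow> frequently (\<lambda>t. s < q t) F \<Longrightarrow> False"
  obtains a where "(q \<longlongrightarrow> a) F"
proof -
  define lo where "lo = Liminf F (\<lambda>t. ereal (q t))"
  define up where "up = Limsup F (\<lambda>t. ereal (q t))"
  have "0 \<le> lo"
    unfolding lo_def by (rule Liminf_bounded) (use bounded in \<open>auto elim: eventually_mono\<close>)
  have "up \<le> L"
    unfolding up_def by (rule Limsup_bounded) (use bounded in \<open>auto elim: eventually_mono\<close>)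
  have "\<not> lo < up"
  proof
    assume "lo < up"
    then obtain r s where rs: "r \<in> \<rat>" "s \<in> \<rat>" "lo < ereal r" "r < s"
        "frequently (\<lambda>t. q t < r) F" "frequently (\<lambda>t. s < q t) F"
      unfolding lo_def up_def by (rule Liminf_less_Limsup_rational_gap)
    have "(0::ereal) < ereal r"
      using \<open>0 \<le> lo\<close> \<open>lo < ereal r\<close> by (rule order.strict_trans1)
    with rs show False
      using no_oscillation by simp
  qed
  moreover have "lo \<le> up"
    unfolding lo_def up_def using \<open>F \<noteq> bot\<close> by (rule Liminf_le_Limsup)
  ultimately have "lo = up"
    by simp
  then obtain a where a: "lo = ereal a"
    using \<open>0 \<le> lo\<close> \<open>up \<le> L\<close> by (cases lo) auto
  have "((\<lambda>t. ereal (q t)) \<longlongrightarrow> ereal a) F"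
    using \<open>lo = up\<close> a \<open>F \<noteq> bot\<close> by (intro Liminf_eq_Limsup) (auto simp: lo_def up_def)
  then show ?thesis
    using that by simp
qed

lemma mono_lipschitz_differentiable_ae:
  fixes h :: "real \<Rightarrow> real"
  assumes mono: "mono h" and lip: "L-lipschitz_on UNIV h"
  obtains N where "negligible N" "\<And>x. x \<notin> N \<Longrightarrow> h differentiable (at x)"
proof -
  define slope where "slope x t = (h (x + t) - h x) / t" for x t
  define Q :: "(real \<times> real) set" where "Q = {(r, s). r \<in> \<rat> \<and> s \<in> \<rat> \<and> 0 < r \<and> r < s}"
  define N where "N = (\<Union>(r, s)\<in>Q. {x. frequently (\<lambda>t. slope x t < r) (at 0) \<and>
      frequently (\<lambda>t. s < slope x t) (at 0)})"
  have "countable Q"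
    by (rule countable_subset[of _ "\<rat> \<times> \<rat>"]) (auto simp: Q_def countable_rat)
  have cont: "continuous_on UNIV h"
    using lip by (rule lipschitz_on_continuous_on)
  have "negligible N"
    unfolding N_def using \<open>countable Q\<close>
    by (intro negligible_countable_Union)
       (auto simp: Q_def slope_def intro: negligible_slope_oscillation[OF mono cont])
  moreover have "h differentiable (at x)" if "x \<notin> N" for x
  proof -
    have "0 \<le> slope x t \<and> slope x t \<le> L" if "t \<noteq> 0" for t
    proof
      show "0 \<le> slope x t"
        using that monoD[OF mono, of x "x + t"] monoD[OF mono, of "x + t" x]
        by (cases "0 < t") (auto simp: slope_def divide_nonpos_neg)
      have "\<bar>h (x + t) - h x\<bar> \<le> L * \<bar>t\<bar>"
        using lipschitz_onD[OF lip, of "x + t" x] by (simp add: dist_real_def)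
      then show "slope x t \<le> L"
        using that by (simp add: slope_def abs_le_iff divide_le_eq abs_if split: if_splits)
    qed
    then have "eventually (\<lambda>t. 0 \<le> slope x t \<and> slope x t \<le> L) (at 0)"
      by (auto simp: eventually_at intro: exI[of _ 1])
    then obtain a where "(slope x \<longlongrightarrow> a) (at 0)"
      by (rule tendsto_if_no_rational_oscillation[OF at_neq_bot])
         (use \<open>x \<notin> N\<close> in \<open>auto simp: N_def Q_def\<close>)
    then have "(h has_real_derivative a) (at x)"
      by (simp add: DERIV_def slope_def[abs_def])
    then show ?thesis
      by (auto simp: has_field_derivative_def intro: differentiableI)
  qed
  ultimately show ?thesis
    using that by blast
qed

lemma lipschitz_differentiable_ae:
  fixes y :: "real \<Rightarrow> 'a::euclidean_space"
  assumes lip: "L-lipschitz_on UNIV y"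
  obtains N where "negligible N" "\<And>t. t \<notin> N \<Longrightarrow> y differentiable (at t)"
proof -
  have "\<exists>N. negligible N \<and> (\<forall>t. t \<notin> N \<longrightarrow> (\<lambda>t. y t \<bullet> i) differentiable (at t))"
    if i: "i \<in> Basis" for i
  proof -
    define h where "h t = y t \<bullet> i + L * t" for t
    have comp_lip: "\<bar>y s \<bullet> i - y t \<bullet> i\<bar> \<le> L * \<bar>s - t\<bar>" for s t
      using Basis_le_norm[OF i, of "y s - y t"] lipschitz_onD[OF lip, of s t]
      by (simp add: dist_norm dist_real_def inner_diff_left)
    have "mono h"
    proof (rule monoI)
      fix s t :: real assume "s \<le> t"
      then show "h s \<le> h t"
        using comp_lip[of t s] by (simp add: h_def abs_le_iff algebra_simps)
    qed
    moreover have "(2 * L)-lipschitz_on UNIV h"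
    proof (rule lipschitz_onI)
      fix s t :: real
      have "\<bar>L * s - L * t\<bar> \<le> L * \<bar>s - t\<bar>"
        using lipschitz_on_nonneg[OF lip] by (simp add: abs_mult flip: right_diff_distrib)
      then show "dist (h s) (h t) \<le> 2 * L * dist s t"
        using comp_lip[of s t] by (simp add: h_def dist_real_def abs_le_iff algebra_simps)
    qed (use lipschitz_on_nonneg[OF lip] in simp)
    ultimately obtain N where N: "negligible N" "\<And>t. t \<notin> N \<Longrightarrow> h differentiable (at t)"
      by (rule mono_lipschitz_differentiable_ae) blast
    have "(\<lambda>t. h t - L * t) differentiable (at t)" if "t \<notin> N" for t
      using N(2)[OF that] by (intro differentiable_diff) auto
    then show ?thesis
      using N(1) by (auto simp: h_def)
  qed
  then obtain N where N: "\<And>i. i \<in> Basis \<Longrightarrow> negligible (N i)"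
      "\<And>i t. i \<in> Basis \<Longrightarrow> t \<notin> N i \<Longrightarrow> (\<lambda>t. y t \<bullet> i) differentiable (at t)"
    by metis
  show ?thesis
  proof (rule that)
    show "negligible (\<Union>i\<in>Basis. N i)"
      using N(1) by (intro negligible_Union) auto
    show "y differentiable (at t)" if "t \<notin> (\<Union>i\<in>Basis. N i)" for t
      using N(2) that by (subst differentiable_componentwise_within) blast
  qed
qed

lemma lipschitz_on_clamp:
  fixes y :: "real \<Rightarrow> 'a::metric_space"
  assumes lip: "L-lipschitz_on {a..b} y" and "a \<le> b"
  shows "L-lipschitz_on UNIV (\<lambda>t. y (max a (min b t)))"
proof (rule lipschitz_onI)
  fix s t :: real
  have "dist (y (max a (min b s))) (y (max a (min b t))) \<le> L * dist (max a (min b s)) (max a (min b t))"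
    using \<open>a \<le> b\<close> by (intro lipschitz_onD[OF lip]) auto
  also have "\<dots> \<le> L * dist s t"
    using lipschitz_on_nonneg[OF lip] by (intro mult_left_mono) (auto simp: dist_real_def)
  finally show "dist (y (max a (min b s))) (y (max a (min b t))) \<le> L * dist s t" .
qed (rule lipschitz_on_nonneg[OF lip])

lemma lipschitz_on_differentiable_ae:
  fixes y :: "real \<Rightarrow> 'a::euclidean_space"
  assumes lip: "L-lipschitz_on {a..b} y"
  obtains N where "negligible N" "\<And>t. t \<in> {a<..<b} - N \<Longrightarrow> y differentiable (at t)"
proof (cases "a \<le> b")
  case False
  then show ?thesis
    using that[of "{}"] by simp
next
  case True
  obtain N where N: "negligible N" "\<And>t. t \<notin> N \<Longrightarrow> (\<lambda>t. y (max a (min b t))) differentiable (at t)"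
    using lipschitz_differentiable_ae[OF lipschitz_on_clamp[OF lip True]] by blast
  have "y differentiable (at t)" if t: "t \<in> {a<..<b} - N" for t
  proof -
    obtain D where "((\<lambda>t. y (max a (min b t))) has_derivative D) (at t)"
      using N(2) t by (auto simp: differentiable_def)
    then have "(y has_derivative D) (at t)"
      by (rule has_derivative_transform_within_open[where s="{a<..<b}"]) (use t in auto)
    then show ?thesis
      by (rule differentiableI)
  qed
  with N(1) show ?thesis
    using that by blast
qed

section \<open>Euler polygons and bounded differential inclusions\<close>

definition euler_node :: "('a::real_vector \<Rightarrow> 'a) \<Rightarrow> real \<Rightarrow> 'a \<Rightarrow> nat \<Rightarrow> 'a" where
  "euler_node v h x j = ((\<lambda>z. z + h *\<^sub>R v z) ^^ j) x"

definition euler_polygon :: "('a::real_vector \<Rightarrow> 'a) \<Rightarrow> real \<Rightarrow> 'a \<Rightarrow> real \<Rightarrow> 'a" where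
  "euler_polygon v h x t =
     (let j = nat \<lfloor>t / h\<rfloor> in euler_node v h x j + (t - real j * h) *\<^sub>R v (euler_node v h x j))"

lemma euler_node_0 [simp]: "euler_node v h x 0 = x"
  by (simp add: euler_node_def)

lemma euler_node_Suc: "euler_node v h x (Suc j) = euler_node v h x j + h *\<^sub>R v (euler_node v h x j)"
  by (simp add: euler_node_def)

lemma euler_polygon_piece:
  assumes "0 < h" "real j * h \<le> t" "t \<le> real (Suc j) * h"
  shows "euler_polygon v h x t = euler_node v h x j + (t - real j * h) *\<^sub>R v (euler_node v h x j)"
proof (cases "t < real (Suc j) * h")
  case True
  with assms have "\<lfloor>t / h\<rfloor> = int j"
    by (simp add: floor_eq_iff pos_le_divide_eq pos_divide_less_eq add.commute)
  then show ?thesis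
    by (simp add: euler_polygon_def)
next
  case False
  with assms have t: "t = real (Suc j) * h"
    by simp
  with \<open>0 < h\<close> have "nat \<lfloor>t / h\<rfloor> = Suc j"
    by simp
  then show ?thesis
    using t by (simp add: euler_polygon_def euler_node_Suc algebra_simps)
qed

lemma euler_polygon_node:
  assumes "0 < h"
  shows "euler_polygon v h x (real j * h) = euler_node v h x j"
  using euler_polygon_piece[OF assms order_refl, of j] assms by simp

lemma euler_polygon_0 [simp]:
  assumes "0 < h"
  shows "euler_polygon v h x 0 = x"
  using euler_polygon_node[OF assms, of v x 0] by simp

lemma euler_polygon_inner_increment_piece:
  fixes v :: "'a::real_inner \<Rightarrow> 'a"
  assumes "0 < h" "real j * h \<le> t1" "t1 \<le> t2" "t2 \<le> real (Suc j) * h"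
    and B: "t1 < t2 \<Longrightarrow> w \<bullet> v (euler_node v h x j) \<le> B"
  shows "w \<bullet> (euler_polygon v h x t2 - euler_polygon v h x t1) \<le> B * (t2 - t1)"
proof (cases "t1 = t2")
  case False
  have "euler_polygon v h x t2 - euler_polygon v h x t1 = (t2 - t1) *\<^sub>R v (euler_node v h x j)"
    using euler_polygon_piece[OF \<open>0 < h\<close>, of j t1 v x] euler_polygon_piece[OF \<open>0 < h\<close>, of j t2 v x]
      assms(2-4) by (simp add: scaleR_diff_left)
  with B False assms(3) show ?thesis
    using mult_left_mono[of "w \<bullet> v (euler_node v h x j)" B "t2 - t1"] by (simp add: mult.commute)
qed simp

lemma euler_polygon_inner_increment_le_pieces:
  fixes v :: "'a::real_inner \<Rightarrow> 'a"
  assumes "0 < h" "real j * h \<le> t1" "t1 \<le> real (Suc j) * h" "t1 \<le> t2" "t2 \<le> real (Suc j + n) * h"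
    and B: "\<And>i. real i * h \<le> t2 \<Longrightarrow> t1 < real (Suc i) * h \<Longrightarrow> w \<bullet> v (euler_node v h x i) \<le> B"
  shows "w \<bullet> (euler_polygon v h x t2 - euler_polygon v h x t1) \<le> B * (t2 - t1)"
  using assms(2-5) B
proof (induction n arbitrary: j t1)
  case 0
  then show ?case
    by (intro euler_polygon_inner_increment_piece[OF \<open>0 < h\<close>]) auto
next
  case (Suc n)
  let ?P = "euler_polygon v h x"
  define g where "g = real (Suc j) * h"
  show ?case
  proof (cases "t2 \<le> g")
    case True
    then show ?thesis
      using Suc.prems by (intro euler_polygon_inner_increment_piece[OF \<open>0 < h\<close>]) (auto simp: g_def)
  next
    case False
    have "w \<bullet> (?P g - ?P t1) \<le> B * (g - t1)"
      using Suc.prems False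
      by (intro euler_polygon_inner_increment_piece[OF \<open>0 < h\<close>]) (auto simp: g_def)
    moreover have "w \<bullet> (?P t2 - ?P g) \<le> B * (t2 - g)"
    proof (rule Suc.IH[of "Suc j"])
      fix i assume i: "real i * h \<le> t2" "g < real (Suc i) * h"
      then have "t1 < real (Suc i) * h"
        using Suc.prems(2) unfolding g_def by linarith
      then show "w \<bullet> v (euler_node v h x i) \<le> B"
        using Suc.prems(5) i(1) by blast
    qed (use Suc.prems False \<open>0 < h\<close> in \<open>auto simp: g_def\<close>)
    ultimately show ?thesis
      by (simp add: inner_diff_right algebra_simps)
  qed
qed

lemma euler_polygon_inner_increment_le:
  fixes v :: "'a::real_inner \<Rightarrow> 'a"
  assumes "0 < h" "0 \<le> t1" "t1 \<le> t2"
    and B: "\<And>j. real j * h \<le> t2 \<Longrightarrow> t1 < real (Suc j) * h \<Longrightarrow> w \<bullet> v (euler_node v h x j) \<le> B"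
  shows "w \<bullet> (euler_polygon v h x t2 - euler_polygon v h x t1) \<le> B * (t2 - t1)"
proof (rule euler_polygon_inner_increment_le_pieces[where j="nat \<lfloor>t1 / h\<rfloor>" and n="nat \<lceil>t2 / h\<rceil>"])
  show "real (nat \<lfloor>t1 / h\<rfloor>) * h \<le> t1" "t1 \<le> real (Suc (nat \<lfloor>t1 / h\<rfloor>)) * h"
    using assms(1,2) real_of_int_floor_add_one_ge[of "t1 / h"]
    by (simp_all add: pos_le_divide_eq[symmetric] pos_divide_le_eq[symmetric] add.commute)
  have "t2 \<le> real (nat \<lceil>t2 / h\<rceil>) * h"
    using assms by (simp add: pos_divide_le_eq[symmetric])
  then show "t2 \<le> real (Suc (nat \<lfloor>t1 / h\<rfloor>) + nat \<lceil>t2 / h\<rceil>) * h"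
    using assms(1) by (simp add: distrib_right add_increasing)
qed (use assms in auto)

lemma euler_polygon_lipschitz:
  fixes v :: "'a::real_inner \<Rightarrow> 'a"
  assumes "0 < h" and bound: "\<And>z. norm (v z) \<le> M"
  shows "M-lipschitz_on {0..} (euler_polygon v h x)"
proof -
  have "0 \<le> M"
    using bound[of 0] norm_ge_zero order_trans by blast
  have increment: "norm (euler_polygon v h x t - euler_polygon v h x s) \<le> M * (t - s)"
    if "0 \<le> s" "s \<le> t" for s t
  proof -
    define w where "w = euler_polygon v h x t - euler_polygon v h x s"
    have "w \<bullet> v (euler_node v h x j) \<le> M * norm w" for j
      using Cauchy_Schwarz_ineq2[of w] bound[of "euler_node v h x j"]
      by (metis abs_le_D1 mult.commute mult_left_mono norm_ge_zero order_trans)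
    then have "w \<bullet> (euler_polygon v h x t - euler_polygon v h x s) \<le> (M * norm w) * (t - s)"
      by (intro euler_polygon_inner_increment_le[OF \<open>0 < h\<close> that])
    then have "w \<bullet> w \<le> (M * norm w) * (t - s)"
      by (simp add: w_def)
    then have "norm w * norm w \<le> norm w * (M * (t - s))"
      by (simp add: power2_norm_eq_inner[symmetric] power2_eq_square algebra_simps)
    then show ?thesis
      by (cases "w = 0") (use \<open>0 \<le> M\<close> that in \<open>auto simp: w_def\<close>)
  qed
  show ?thesis
  proof (rule lipschitz_onI[OF _ \<open>0 \<le> M\<close>])
    fix s t :: real assume "s \<in> {0..}" "t \<in> {0..}"
    then show "dist (euler_polygon v h x s) (euler_polygon v h x t) \<le> M * dist s t"
      using increment[of s t] increment[of t s]
      by (cases "s \<le> t") (auto simp: dist_norm dist_real_def norm_minus_commute)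
  qed
qed

definition krasovskii_regularization :: "('a::real_normed_vector \<Rightarrow> 'a set) \<Rightarrow> 'a \<Rightarrow> 'a set" where
  "krasovskii_regularization \<Phi> z = (\<Inter>\<delta>\<in>{0<..}. closure (convex hull (\<Union>(\<Phi> ` ball z \<delta>))))"

lemma krasovskii_regularization_uminus:
  fixes \<Phi> :: "'a::real_normed_vector \<Rightarrow> 'a set"
  assumes "- v \<in> krasovskii_regularization (\<lambda>z. uminus ` \<Phi> z) z"
  shows "v \<in> krasovskii_regularization \<Phi> z"
  unfolding krasovskii_regularization_def
proof (intro INT_I)
  fix \<delta> :: real assume "\<delta> \<in> {0<..}"
  define C where "C = closure (convex hull (\<Union>(\<Phi> ` ball z \<delta>)))"
  have "closure (convex hull (\<Union>((\<lambda>z. uminus ` \<Phi> z) ` ball z \<delta>))) \<subseteq> uminus ` C"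
  proof (intro closure_minimal hull_minimal)
    show "\<Union>((\<lambda>z. uminus ` \<Phi> z) ` ball z \<delta>) \<subseteq> uminus ` C"
      unfolding C_def using closure_subset hull_subset by fast
  qed (auto simp: C_def intro: closed_negations convex_negations convex_closure)
  with assms \<open>\<delta> \<in> {0<..}\<close> have "- v \<in> uminus ` C"
    unfolding krasovskii_regularization_def by blast
  then show "v \<in> closure (convex hull (\<Union>(\<Phi> ` ball z \<delta>)))"
    by (force simp: C_def)
qed

lemma has_vector_derivative_inner_lower_bound:
  assumes "(y has_vector_derivative w) (at t)" "0 < \<eta>0"
    and lower: "\<And>\<eta>. 0 < \<eta> \<Longrightarrow> \<eta> < \<eta>0 \<Longrightarrow> b * \<eta> \<le> a \<bullet> (y (t + \<eta>) - y t)"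
  shows "b \<le> a \<bullet> w"
proof -
  have "((\<lambda>s. a \<bullet> y s) has_real_derivative a \<bullet> w) (at t)"
    using has_derivative_inner_right[OF assms(1)[unfolded has_vector_derivative_def], of a]
    by (simp add: has_field_derivative_def mult_commute_abs)
  then have "((\<lambda>\<eta>. (a \<bullet> y (t + \<eta>) - a \<bullet> y t) / \<eta>) \<longlongrightarrow> a \<bullet> w) (at_right 0)"
    unfolding DERIV_def by (simp add: filterlim_at_split)
  moreover have "eventually (\<lambda>\<eta>. b \<le> (a \<bullet> y (t + \<eta>) - a \<bullet> y t) / \<eta>) (at_right 0)"
    unfolding eventually_at_right_field
    using lower \<open>0 < \<eta>0\<close> by (intro exI[of _ \<eta>0]) (auto simp: pos_le_divide_eq inner_diff_right)
  ultimately show ?thesis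
    by (rule tendsto_lowerbound) simp
qed

lemma euler_node_dist_le:
  fixes v :: "'a::real_inner \<Rightarrow> 'a"
  assumes "0 < h" and bound: "\<And>z. norm (v z) \<le> M"
    and "0 \<le> s" "0 \<le> \<eta>" "real j * h \<le> s + \<eta>" "s < real (Suc j) * h"
  shows "dist (euler_node v h x j) (euler_polygon v h x s) \<le> M * (h + \<eta>)"
    and "dist (euler_node v h x j) x \<le> M * (s + \<eta>)"
proof -
  have lip: "M-lipschitz_on {0..} (euler_polygon v h x)"
    by (rule euler_polygon_lipschitz[OF \<open>0 < h\<close> bound])
  have node: "euler_node v h x j = euler_polygon v h x (real j * h)"
    by (simp add: euler_polygon_node \<open>0 < h\<close>)
  have "0 \<le> real j * h" "\<bar>real j * h - s\<bar> \<le> h + \<eta>"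
    using assms(1,3-6) by (auto simp: algebra_simps)
  then show "dist (euler_node v h x j) (euler_polygon v h x s) \<le> M * (h + \<eta>)"
    unfolding node using lipschitz_onD[OF lip, of "real j * h" s] lipschitz_on_nonneg[OF lip] \<open>0 \<le> s\<close>
    by (auto simp: dist_real_def intro: order_trans mult_left_mono)
  show "dist (euler_node v h x j) x \<le> M * (s + \<eta>)"
    unfolding node using lipschitz_onD[OF lip, of "real j * h" 0] lipschitz_on_nonneg[OF lip]
      \<open>0 \<le> real j * h\<close> assms(5) \<open>0 < h\<close>
    by (auto simp: dist_real_def intro: order_trans mult_left_mono)
qed

lemma euler_polygon_inner_increment_ge:
  fixes v :: "'a::real_inner \<Rightarrow> 'a"
  assumes "0 < h" and bound: "\<And>z. norm (v z) \<le> M" and "0 \<le> t" "0 \<le> \<eta>"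
    and lower: "\<And>z. dist z x \<le> M * (t + \<eta>) \<Longrightarrow> dist z (euler_polygon v h x t) \<le> M * (h + \<eta>) \<Longrightarrow>
      b \<le> a \<bullet> v z"
  shows "b * \<eta> \<le> a \<bullet> (euler_polygon v h x (t + \<eta>) - euler_polygon v h x t)"
proof -
  have "(- a) \<bullet> (euler_polygon v h x (t + \<eta>) - euler_polygon v h x t) \<le> (- b) * (t + \<eta> - t)"
  proof (rule euler_polygon_inner_increment_le[OF \<open>0 < h\<close>])
    fix j assume "real j * h \<le> t + \<eta>" "t < real (Suc j) * h"
    then show "(- a) \<bullet> v (euler_node v h x j) \<le> - b"
      using lower euler_node_dist_le[OF \<open>0 < h\<close> bound \<open>0 \<le> t\<close> \<open>0 \<le> \<eta>\<close>] by simp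
  qed (use assms in auto)
  then show ?thesis
    by (simp add: inner_diff_right)
qed

lemma euler_limit_inner_increment_ge:
  fixes v :: "'a::real_inner \<Rightarrow> 'a"
  assumes bound: "\<And>z. norm (v z) \<le> M" and steps: "\<And>n. 0 < h n" "h \<longlonglongrightarrow> 0"
    and conv: "\<And>s. s \<in> {t, t + \<eta>} \<Longrightarrow> (\<lambda>n. euler_polygon v (h n) x s) \<longlonglongrightarrow> y s"
    and "0 \<le> t" "0 \<le> \<eta>" "M * \<eta> < \<delta>"
    and lower: "\<And>z. dist z x \<le> M * (t + \<eta>) \<Longrightarrow> dist z (y t) < \<delta> \<Longrightarrow> b \<le> a \<bullet> v z"
  shows "b * \<eta> \<le> a \<bullet> (y (t + \<eta>) - y t)"
proof -
  let ?P = "\<lambda>n. euler_polygon v (h n) x" and ?e = "(\<delta> - M * \<eta>) / 2"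
  have "(\<lambda>n. M * h n) \<longlonglongrightarrow> 0"
    using steps(2) by (rule tendsto_mult_right_zero)
  then have "eventually (\<lambda>n. M * h n < ?e) sequentially"
    using \<open>M * \<eta> < \<delta>\<close> by (intro order_tendstoD(2)) auto
  moreover have "eventually (\<lambda>n. dist (?P n t) (y t) < ?e) sequentially"
    using conv[of t] \<open>M * \<eta> < \<delta>\<close> by (intro tendstoD) auto
  ultimately have "eventually (\<lambda>n. b * \<eta> \<le> a \<bullet> (?P n (t + \<eta>) - ?P n t)) sequentially"
  proof eventually_elim
    case (elim n)
    show ?case
    proof (rule euler_polygon_inner_increment_ge[OF steps(1) bound \<open>0 \<le> t\<close> \<open>0 \<le> \<eta>\<close> lower])
      fix z assume "dist z (?P n t) \<le> M * (h n + \<eta>)"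
      then show "dist z (y t) < \<delta>"
        using elim dist_triangle[of z "y t" "?P n t"] by (simp add: distrib_left)
    qed
  qed
  moreover have "(\<lambda>n. a \<bullet> (?P n (t + \<eta>) - ?P n t)) \<longlonglongrightarrow> a \<bullet> (y (t + \<eta>) - y t)"
    by (intro tendsto_intros conv) auto
  ultimately show ?thesis
    by (intro tendsto_lowerbound) auto
qed

lemma euler_limit_derivative_mem:
  fixes v :: "'a::euclidean_space \<Rightarrow> 'a"
  assumes bound: "\<And>z. norm (v z) \<le> M" and "M * T \<le> \<rho>" and steps: "\<And>n. 0 < h n" "h \<longlonglongrightarrow> 0"
    and conv: "\<And>s. s \<in> {0..T} \<Longrightarrow> (\<lambda>n. euler_polygon v (h n) x s) \<longlonglongrightarrow> y s"
    and t: "0 < t" "t < T" and der: "(y has_vector_derivative w) (at t)"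
    and C: "closed C" "convex C" "0 < \<delta>" "\<And>z. z \<in> cball x \<rho> \<Longrightarrow> z \<in> ball (y t) \<delta> \<Longrightarrow> v z \<in> C"
  shows "w \<in> C"
proof (rule ccontr)
  assume "w \<notin> C"
  then obtain a b where ab: "a \<bullet> w < b" "\<And>c. c \<in> C \<Longrightarrow> b < a \<bullet> c"
    using separating_hyperplane_closed_point[OF C(2,1)] by blast
  have "0 \<le> M"
    using bound[of x] norm_ge_zero order_trans by blast
  define \<eta>0 where "\<eta>0 = min (T - t) (\<delta> / (M + 1))"
  have "0 < \<eta>0"
    using t \<open>0 < \<delta>\<close> \<open>0 \<le> M\<close> by (simp add: \<eta>0_def)
  have "b * \<eta> \<le> a \<bullet> (y (t + \<eta>) - y t)" if "0 < \<eta>" "\<eta> < \<eta>0" for \<eta>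
  proof (rule euler_limit_inner_increment_ge[OF bound steps])
    have "M * \<eta> \<le> M * (\<delta> / (M + 1))"
      using that \<open>0 \<le> M\<close> by (intro mult_left_mono) (auto simp: \<eta>0_def)
    also have "\<dots> < \<delta>"
      using \<open>0 < \<delta>\<close> \<open>0 \<le> M\<close> by (simp add: field_simps)
    finally show "M * \<eta> < \<delta>" .
    fix z assume "dist z x \<le> M * (t + \<eta>)" "dist z (y t) < \<delta>"
    moreover have "M * (t + \<eta>) \<le> M * T"
      using that \<open>0 \<le> M\<close> by (intro mult_left_mono) (auto simp: \<eta>0_def)
    ultimately have "v z \<in> C"
      using C(4) \<open>M * T \<le> \<rho>\<close> by (simp add: dist_commute)
    then show "b \<le> a \<bullet> v z"
      using ab(2) by (simp add: less_imp_le)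
  qed (use conv t that in \<open>auto simp: \<eta>0_def\<close>)
  then have "b \<le> a \<bullet> w"
    by (rule has_vector_derivative_inner_lower_bound[OF der \<open>0 < \<eta>0\<close>])
  with ab(1) show False
    by simp
qed

lemma euler_limit_in_krasovskii:
  fixes v :: "'a::euclidean_space \<Rightarrow> 'a"
  assumes sel: "\<And>z. z \<in> cball x \<rho> \<Longrightarrow> v z \<in> \<Phi> z" and bound: "\<And>z. norm (v z) \<le> M"
    and "M * T \<le> \<rho>" and steps: "\<And>n. 0 < h n" "h \<longlonglongrightarrow> 0"
    and conv: "\<And>s. s \<in> {0..T} \<Longrightarrow> (\<lambda>n. euler_polygon v (h n) x s) \<longlonglongrightarrow> y s"
    and t: "0 < t" "t < T" and der: "(y has_vector_derivative w) (at t)"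
  shows "w \<in> krasovskii_regularization \<Phi> (y t)"
  unfolding krasovskii_regularization_def
proof (intro INT_I)
  fix \<delta> :: real assume "\<delta> \<in> {0<..}"
  show "w \<in> closure (convex hull (\<Union>(\<Phi> ` ball (y t) \<delta>)))"
  proof (rule euler_limit_derivative_mem[OF bound \<open>M * T \<le> \<rho>\<close> steps conv t der])
    fix z assume "z \<in> cball x \<rho>" "z \<in> ball (y t) \<delta>"
    then have "v z \<in> \<Union>(\<Phi> ` ball (y t) \<delta>)"
      using sel by blast
    then show "v z \<in> closure (convex hull (\<Union>(\<Phi> ` ball (y t) \<delta>)))"
      by (meson closure_subset hull_subset subsetD)
  qed (use \<open>\<delta> \<in> {0<..}\<close> in \<open>auto simp: convex_closure\<close>)
qed

lemma equilipschitz_pointwise_convergent_subsequence: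
  fixes P :: "nat \<Rightarrow> real \<Rightarrow> 'a::euclidean_space"
  assumes lip: "\<And>n. M-lipschitz_on {a..b} (P n)"
    and bounded: "\<And>n t. t \<in> {a..b} \<Longrightarrow> norm (P n t) \<le> B"
  obtains y k where "strict_mono k" "M-lipschitz_on {a..b} y"
    "\<And>t. t \<in> {a..b} \<Longrightarrow> (\<lambda>n. P (k n) t) \<longlonglongrightarrow> y t"
proof -
  have "0 \<le> M"
    using lipschitz_on_nonneg[OF lip] .
  obtain y k where k: "strict_mono (k :: nat \<Rightarrow> nat)"
      and unif: "\<And>e. 0 < e \<Longrightarrow> \<exists>N. \<forall>n t. n \<ge> N \<and> t \<in> {a..b} \<longrightarrow> norm (P (k n) t - y t) < e"
  proof (rule Arzela_Ascoli[of "{a..b}" P B])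
    fix t e :: real assume "t \<in> {a..b}" "0 < e"
    show "\<exists>d>0. \<forall>n s. s \<in> {a..b} \<and> norm (t - s) < d \<longrightarrow> norm (P n t - P n s) < e"
    proof (intro exI[of _ "e / (M + 1)"] conjI allI impI)
      fix n s assume s: "s \<in> {a..b} \<and> norm (t - s) < e / (M + 1)"
      have "norm (P n t - P n s) \<le> M * \<bar>t - s\<bar>"
        using lipschitz_onD[OF lip \<open>t \<in> {a..b}\<close>, of s] s by (simp add: dist_norm dist_real_def)
      also have "\<dots> \<le> M * (e / (M + 1))"
        using s \<open>0 \<le> M\<close> by (intro mult_left_mono) auto
      also have "\<dots> < e"
        using \<open>0 < e\<close> \<open>0 \<le> M\<close> by (simp add: field_simps)
      finally show "norm (P n t - P n s) < e" .
    qed (use \<open>0 < e\<close> \<open>0 \<le> M\<close> in simp)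
  qed (use bounded in auto)
  have conv: "(\<lambda>n. P (k n) t) \<longlonglongrightarrow> y t" if "t \<in> {a..b}" for t
  proof (rule LIMSEQ_I)
    fix e :: real assume "0 < e"
    then show "\<exists>N. \<forall>n\<ge>N. norm (P (k n) t - y t) < e"
      using unif that by blast
  qed
  have "M-lipschitz_on {a..b} y"
  proof (rule lipschitz_onI[OF _ \<open>0 \<le> M\<close>])
    fix s t assume "s \<in> {a..b}" "t \<in> {a..b}"
    then show "dist (y s) (y t) \<le> M * dist s t"
      using lipschitz_onD[OF lip] by (intro LIMSEQ_le_const2[OF tendsto_dist[OF conv conv]]) auto
  qed
  with k conv show ?thesis
    using that by blast
qed

lemma euler_polygon_limit_exists:
  fixes v :: "'a::euclidean_space \<Rightarrow> 'a"
  assumes bound: "\<And>z. norm (v z) \<le> M" and "0 < T"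
  obtains y h where "\<And>n. 0 < h n" "h \<longlonglongrightarrow> 0" "y 0 = x" "M-lipschitz_on {0..T} y"
    "\<And>t. t \<in> {0..T} \<Longrightarrow> (\<lambda>n. euler_polygon v (h n) x t) \<longlonglongrightarrow> y t"
proof -
  have "0 \<le> M"
    using bound[of x] norm_ge_zero order_trans by blast
  define h where "h n = T / real (Suc n)" for n
  have h: "0 < h n" for n
    using \<open>0 < T\<close> by (simp add: h_def)
  have "h \<longlonglongrightarrow> 0"
    unfolding h_def using LIMSEQ_Suc[OF lim_const_over_n[of T]] by simp
  let ?P = "\<lambda>n. euler_polygon v (h n) x"
  have lip: "M-lipschitz_on {0..T} (?P n)" for n
    using euler_polygon_lipschitz[OF h bound] by (rule lipschitz_on_subset) auto
  have P_bounded: "norm (?P n t) \<le> norm x + M * T" if "t \<in> {0..T}" for n t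
  proof -
    have "dist (?P n t) (?P n 0) \<le> M * T"
      using lipschitz_onD[OF lip[of n] that, of 0] that \<open>0 < T\<close> \<open>0 \<le> M\<close>
      by (auto simp: dist_real_def intro: order_trans mult_left_mono)
    then show ?thesis
      using h norm_triangle_sub[of "?P n t" x] by (simp add: dist_norm)
  qed
  obtain y k where k: "strict_mono k" "M-lipschitz_on {0..T} y"
      and conv: "\<And>t. t \<in> {0..T} \<Longrightarrow> (\<lambda>n. ?P (k n) t) \<longlonglongrightarrow> y t"
  proof (rule equilipschitz_pointwise_convergent_subsequence[where P="?P" and B="norm x + M * T"])
    show "norm (?P n t) \<le> norm x + M * T" if "t \<in> {0..T}" for n t
      using that by (rule P_bounded)
  qed (use lip that in blast)+
  have "y 0 = x"
    using conv[of 0] \<open>0 < T\<close> h by (simp add: LIMSEQ_const_iff)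
  moreover have "(h \<circ> k) \<longlonglongrightarrow> 0"
    using \<open>h \<longlonglongrightarrow> 0\<close> k(1) by (rule LIMSEQ_subseq_LIMSEQ)
  ultimately show ?thesis
    using that[of "h \<circ> k" y] h k(2) conv by simp
qed

lemma bounded_selection:
  assumes "\<And>z. z \<in> S \<Longrightarrow> \<Phi> z \<noteq> {}" "\<And>z w. z \<in> S \<Longrightarrow> w \<in> \<Phi> z \<Longrightarrow> norm w \<le> M" "0 \<le> M"
  obtains v where "\<And>z. z \<in> S \<Longrightarrow> v z \<in> \<Phi> z" "\<And>z. norm (v z) \<le> M"
proof
  define v where "v z = (if z \<in> S then SOME w. w \<in> \<Phi> z else 0)" for z
  show sel: "v z \<in> \<Phi> z" if "z \<in> S" for z
    using assms(1)[OF that] that by (simp add: v_def some_in_eq)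
  show "norm (v z) \<le> M" for z
    using assms(2)[OF _ sel, of z] \<open>0 \<le> M\<close> by (cases "z \<in> S") (auto simp: v_def)
qed

lemma bounded_inclusion_forward_solution:
  fixes \<Phi> :: "'a::euclidean_space \<Rightarrow> 'a set"
  assumes "0 < \<rho>" and nonempty: "\<And>z. z \<in> cball x \<rho> \<Longrightarrow> \<Phi> z \<noteq> {}"
    and bounded: "\<And>z w. z \<in> cball x \<rho> \<Longrightarrow> w \<in> \<Phi> z \<Longrightarrow> norm w \<le> M"
  obtains T y where "0 < T" "y 0 = x" "M-lipschitz_on {0..T} y"
    "\<And>t w. t \<in> {0<..<T} \<Longrightarrow> (y has_vector_derivative w) (at t) \<Longrightarrow>
      w \<in> krasovskii_regularization \<Phi> (y t)"
proof -
  have "x \<in> cball x \<rho>"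
    using \<open>0 < \<rho>\<close> by simp
  then obtain w where "w \<in> \<Phi> x"
    using nonempty by blast
  then have "0 \<le> M"
    using bounded[OF \<open>x \<in> cball x \<rho>\<close>] norm_ge_zero order_trans by blast
  then obtain v where sel: "\<And>z. z \<in> cball x \<rho> \<Longrightarrow> v z \<in> \<Phi> z" and bound: "\<And>z. norm (v z) \<le> M"
    using bounded_selection[of "cball x \<rho>" \<Phi> M] nonempty bounded by blast
  define T where "T = \<rho> / (M + 1)"
  have "0 < T" "M * T \<le> \<rho>"
    using \<open>0 < \<rho>\<close> \<open>0 \<le> M\<close> by (simp_all add: T_def field_simps)
  obtain y h where h: "\<And>n. 0 < h n" "h \<longlonglongrightarrow> 0" and y: "y 0 = x" "M-lipschitz_on {0..T} y"
      and conv: "\<And>t. t \<in> {0..T} \<Longrightarrow> (\<lambda>n. euler_polygon v (h n) x t) \<longlonglongrightarrow> y t"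
    by (rule euler_polygon_limit_exists[OF bound \<open>0 < T\<close>]) (rule that)
  have "w \<in> krasovskii_regularization \<Phi> (y t)"
    if "t \<in> {0<..<T}" "(y has_vector_derivative w) (at t)" for t w
    using euler_limit_in_krasovskii[OF sel bound \<open>M * T \<le> \<rho>\<close> h conv] that by auto
  with \<open>0 < T\<close> y show ?thesis
    using that by blast
qed

lemma lipschitz_on_reflect:
  fixes y :: "real \<Rightarrow> 'a::metric_space"
  assumes "M-lipschitz_on {0..T} y"
  shows "M-lipschitz_on {-T..0} (\<lambda>t. y (- t))"
proof (rule lipschitz_onI)
  fix s t :: real assume "s \<in> {-T..0}" "t \<in> {-T..0}"
  then show "dist (y (- s)) (y (- t)) \<le> M * dist s t"
    using lipschitz_onD[OF assms, of "- s" "- t"] by (auto simp: dist_real_def abs_minus_commute)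
qed (rule lipschitz_on_nonneg[OF assms])

lemma has_vector_derivative_reflect:
  assumes "(y has_vector_derivative w) (at t)"
  shows "((\<lambda>s. y (- s)) has_vector_derivative - w) (at (- t))"
proof -
  have "(uminus has_vector_derivative -1) (at (- t))"
    using has_vector_derivative_minus[OF has_vector_derivative_id] by simp
  then show ?thesis
    using vector_diff_chain_at[of uminus "-1" "- t" y w] assms by (simp add: o_def)
qed

lemma bounded_inclusion_solution:
  fixes \<Phi> :: "'a::euclidean_space \<Rightarrow> 'a set"
  assumes "0 < \<rho>" and nonempty: "\<And>z. z \<in> cball x \<rho> \<Longrightarrow> \<Phi> z \<noteq> {}"
    and bounded: "\<And>z w. z \<in> cball x \<rho> \<Longrightarrow> w \<in> \<Phi> z \<Longrightarrow> norm w \<le> M"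
  obtains T y where "0 < T" "y 0 = x" "M-lipschitz_on {-T..T} y"
    "\<And>t w. t \<in> {-T<..<T} - {0} \<Longrightarrow> (y has_vector_derivative w) (at t) \<Longrightarrow>
      w \<in> krasovskii_regularization \<Phi> (y t)"
proof -
  obtain T1 y1 where y1: "0 < T1" "y1 0 = x" "M-lipschitz_on {0..T1} y1"
      "\<And>t w. t \<in> {0<..<T1} \<Longrightarrow> (y1 has_vector_derivative w) (at t) \<Longrightarrow>
        w \<in> krasovskii_regularization \<Phi> (y1 t)"
    using bounded_inclusion_forward_solution[where x=x and \<Phi>=\<Phi> and \<rho>=\<rho> and M=M] assms by blast
  obtain T2 y2 where y2: "0 < T2" "y2 0 = x" "M-lipschitz_on {0..T2} y2"
      "\<And>t w. t \<in> {0<..<T2} \<Longrightarrow> (y2 has_vector_derivative w) (at t) \<Longrightarrow>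
        w \<in> krasovskii_regularization (\<lambda>z. uminus ` \<Phi> z) (y2 t)"
  proof (rule bounded_inclusion_forward_solution[where x=x and \<Phi>="\<lambda>z. uminus ` \<Phi> z" and \<rho>=\<rho> and M=M])
    show "norm w \<le> M" if "z \<in> cball x \<rho>" "w \<in> uminus ` \<Phi> z" for z w
      using bounded[OF that(1)] that(2) by auto
  qed (use \<open>0 < \<rho>\<close> nonempty in auto)
  define T where "T = min T1 T2"
  define y where "y t = (if t \<le> 0 then y2 (- t) else y1 t)" for t
  have "M-lipschitz_on {-T..0} (\<lambda>t. y2 (- t))"
    by (rule lipschitz_on_subset[OF lipschitz_on_reflect[OF y2(3)]]) (auto simp: T_def)
  moreover have "M-lipschitz_on {0..T} y1"
    by (rule lipschitz_on_subset[OF y1(3)]) (auto simp: T_def)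
  ultimately have lip: "M-lipschitz_on {-T..T} y"
    unfolding y_def using y1(2) y2(2) by (intro lipschitz_on_concat) auto
  have derivative: "w \<in> krasovskii_regularization \<Phi> (y t)"
    if t: "t \<in> {-T<..<T} - {0}" and der: "(y has_vector_derivative w) (at t)" for t w
  proof (cases "0 < t")
    case True
    have "(y1 has_vector_derivative w) (at t)"
      by (rule has_vector_derivative_transform_within_open[OF der, of "{0<..}"])
         (use True in \<open>auto simp: y_def\<close>)
    then show ?thesis
      using y1(4) t True by (auto simp: T_def y_def)
  next
    case False
    with t have "t < 0" by simp
    have "(y2 has_vector_derivative - w) (at (- t))"
      by (rule has_vector_derivative_transform_within_open[OF has_vector_derivative_reflect[OF der],
            of "{0<..}"])
         (use \<open>t < 0\<close> in \<open>auto simp: y_def\<close>)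
    then have "- w \<in> krasovskii_regularization (\<lambda>z. uminus ` \<Phi> z) (y2 (- t))"
      using y2(4) t \<open>t < 0\<close> by (auto simp: T_def)
    then show ?thesis
      using \<open>t < 0\<close> krasovskii_regularization_uminus by (simp add: y_def)
  qed
  have "0 < T" "y 0 = x"
    using y1(1) y2(1,2) by (simp_all add: T_def y_def)
  then show ?thesis
    using lip derivative by (rule that)
qed

section \<open>Filippov solutions of locally bounded vector fields\<close>

lemma Filippov_subset_closure_convex_hull:
  fixes G :: "'n::euclidean_space \<Rightarrow> 'n"
  assumes "S \<in> null_sets lebesgue" "dist z z0 < \<delta> / 2"
  shows "Filippov G z \<subseteq> closure (convex hull {G y | y. norm (y - z0) \<le> \<delta> \<and> y \<notin> S})"
proof -
  have "0 < \<delta> / 2"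
    using assms(2) zero_le_dist[of z z0] by linarith
  then have "Filippov G z \<subseteq> closure (convex hull {G y | y. norm (y - z) \<le> \<delta> / 2 \<and> y \<notin> S})"
    using assms(1) unfolding Filippov_def by blast
  also have "\<dots> \<subseteq> closure (convex hull {G y | y. norm (y - z0) \<le> \<delta> \<and> y \<notin> S})"
  proof (intro closure_mono hull_mono subsetI)
    fix v assume "v \<in> {G y | y. norm (y - z) \<le> \<delta> / 2 \<and> y \<notin> S}"
    then obtain y where y: "v = G y" "norm (y - z) \<le> \<delta> / 2" "y \<notin> S"
      by blast
    moreover have "norm (y - z0) \<le> norm (y - z) + dist z z0"
      using norm_triangle_ineq[of "y - z" "z - z0"] by (simp add: dist_norm)
    ultimately show "v \<in> {G y | y. norm (y - z0) \<le> \<delta> \<and> y \<notin> S}"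
      using assms(2) by force
  qed
  finally show ?thesis .
qed

lemma krasovskii_regularization_Filippov_subset:
  fixes G :: "'n::euclidean_space \<Rightarrow> 'n"
  shows "krasovskii_regularization (Filippov G) z \<subseteq> Filippov G z"
proof
  fix v assume v: "v \<in> krasovskii_regularization (Filippov G) z"
  show "v \<in> Filippov G z"
    unfolding Filippov_def
  proof (intro INT_I)
    fix \<delta> :: real and S :: "'n set" assume "\<delta> \<in> {0<..}" "S \<in> null_sets lebesgue"
    define C where "C = closure (convex hull {G y | y. norm (y - z) \<le> \<delta> \<and> y \<notin> S})"
    have "\<Union>(Filippov G ` ball z (\<delta> / 2)) \<subseteq> C"
      using Filippov_subset_closure_convex_hull[OF \<open>S \<in> null_sets lebesgue\<close>]
      by (fastforce simp: C_def dist_commute)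
    then have "closure (convex hull (\<Union>(Filippov G ` ball z (\<delta> / 2)))) \<subseteq> C"
      by (intro closure_minimal hull_minimal) (auto simp: C_def convex_closure)
    moreover have "v \<in> closure (convex hull (\<Union>(Filippov G ` ball z (\<delta> / 2))))"
      using v \<open>\<delta> \<in> {0<..}\<close> unfolding krasovskii_regularization_def by auto
    ultimately show "v \<in> closure (convex hull {G y | y. norm (y - z) \<le> \<delta> \<and> y \<notin> S})"
      by (auto simp: C_def)
  qed
qed

lemma Filippov_norm_le:
  fixes G :: "'n::euclidean_space \<Rightarrow> 'n"
  assumes "0 < r" and bounded: "\<And>w. w \<in> cball z r \<Longrightarrow> norm (G w) \<le> M" and "v \<in> Filippov G z"
  shows "norm v \<le> M"
proof -
  have "v \<in> closure (convex hull {G y | y. norm (y - z) \<le> r \<and> y \<notin> {}})"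
    using assms(1,3) unfolding Filippov_def by blast
  also have "\<dots> \<subseteq> cball 0 M"
    using bounded by (intro closure_minimal hull_minimal) (auto simp: dist_norm norm_minus_commute)
  finally show ?thesis
    by simp
qed

lemma Filippov_nonempty:
  fixes G :: "'n::euclidean_space \<Rightarrow> 'n"
  assumes "0 < r" and bounded: "\<And>w. w \<in> cball z r \<Longrightarrow> norm (G w) \<le> M"
  shows "Filippov G z \<noteq> {}"
proof -
  define C where "C = (\<lambda>(\<delta>, S). closure (convex hull {G y | y. norm (y - z) \<le> \<delta> \<and> y \<notin> S}))"
  define I :: "(real \<times> 'n set) set" where "I = {0<..} \<times> null_sets lebesgue"
  have "cball 0 M \<inter> \<Inter>(C ` I) \<noteq> {}"
  proof (rule compact_imp_fip_image)
    fix J assume J: "finite J" "J \<subseteq> I"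
    define \<delta> where "\<delta> = Min (insert r (fst ` J))"
    have "0 < \<delta>"
      using J \<open>0 < r\<close> by (auto simp: \<delta>_def I_def)
    have "negligible (\<Union>(snd ` J))"
      using J by (intro negligible_Union) (auto simp: I_def negligible_iff_null_sets)
    moreover have "\<not> negligible (ball z \<delta>)"
      using \<open>0 < \<delta>\<close> by (intro open_not_negligible) auto
    ultimately obtain w where w: "w \<in> ball z \<delta>" "w \<notin> \<Union>(snd ` J)"
      using negligible_subset by blast
    have "\<delta> \<le> r"
      using J by (simp add: \<delta>_def)
    have \<delta>_le: "\<delta> \<le> fst i" if "i \<in> J" for i
      using J that by (simp add: \<delta>_def)
    have "G w \<in> C i" if "i \<in> J" for i
    proof (cases i)
      case (Pair d S)
      with that w \<delta>_le[OF that] have "G w \<in> {G y | y. norm (y - z) \<le> d \<and> y \<notin> S}"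
        by (force simp: dist_norm norm_minus_commute)
      then show ?thesis
        using Pair by (simp add: C_def hull_inc closure_subset[THEN subsetD])
    qed
    moreover have "G w \<in> cball 0 M"
      using bounded[of w] w(1) \<open>\<delta> \<le> r\<close> J by (simp add: dist_norm norm_minus_commute)
    ultimately show "cball 0 M \<inter> \<Inter>(C ` J) \<noteq> {}"
      by blast
  qed (auto simp: C_def)
  moreover have "\<Inter>(C ` I) \<subseteq> Filippov G z"
    unfolding Filippov_def I_def C_def by auto
  ultimately show ?thesis
    by blast
qed

lemma lipschitz_on_imp_absolutely_continuous_fun:
  fixes y :: "real \<Rightarrow> 'a::real_normed_vector"
  assumes lip: "M-lipschitz_on I y"
  shows "absolutely_continuous_fun I y"
  unfolding absolutely_continuous_fun_def
proof (intro allI impI exI[of _ "\<epsilon> / (M + 1)" for \<epsilon>] conjI)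
  fix \<epsilon> :: real and N :: nat and a b :: "nat \<Rightarrow> real"
  assume "0 < \<epsilon>"
  have "0 \<le> M"
    using lip by (rule lipschitz_on_nonneg)
  then show "0 < \<epsilon> / (M + 1)"
    using \<open>0 < \<epsilon>\<close> by simp
  assume "(\<forall>k<N. a k \<le> b k \<and> {a k..b k} \<subseteq> I) \<and>
    (\<forall>k<N. \<forall>l<N. k \<noteq> l \<longrightarrow> {a k<..<b k} \<inter> {a l<..<b l} = {}) \<and> (\<Sum>k<N. b k - a k) < \<epsilon> / (M + 1)"
  then have intervals: "\<And>k. k < N \<Longrightarrow> a k \<le> b k \<and> {a k..b k} \<subseteq> I"
    and short: "(\<Sum>k<N. b k - a k) < \<epsilon> / (M + 1)"
    by auto
  have "(\<Sum>k<N. norm (y (b k) - y (a k))) \<le> (\<Sum>k<N. M * (b k - a k))"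
  proof (rule sum_mono)
    fix k assume "k \<in> {..<N}"
    then have "a k \<le> b k" "a k \<in> I" "b k \<in> I"
      using intervals[of k] by auto
    then show "norm (y (b k) - y (a k)) \<le> M * (b k - a k)"
      using lipschitz_onD[OF lip, of "b k" "a k"] by (simp add: dist_norm dist_real_def)
  qed
  also have "\<dots> = M * (\<Sum>k<N. b k - a k)"
    by (simp add: sum_distrib_left)
  also have "\<dots> \<le> M * (\<epsilon> / (M + 1))"
    using short \<open>0 \<le> M\<close> by (intro mult_left_mono) auto
  also have "\<dots> < \<epsilon>"
    using \<open>0 < \<epsilon>\<close> \<open>0 \<le> M\<close> by (simp add: field_simps)
  finally show "(\<Sum>k<N. norm (y (b k) - y (a k))) < \<epsilon>" .
qed

lemma Filippov_solution_exists_locally_bounded: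
  fixes G :: "'n::euclidean_space \<Rightarrow> 'n"
  assumes "0 < \<rho>" and bounded: "\<And>z. z \<in> cball x \<rho> \<Longrightarrow> norm (G z) \<le> M"
  shows "\<exists>\<delta>>0. \<exists>y. Filippov_solution G {-\<delta><..<\<delta>} y \<and> y 0 = x"
proof -
  have near: "w \<in> cball x \<rho>" if "z \<in> cball x (\<rho> / 2)" "w \<in> cball z (\<rho> / 2)" for z w
    using that dist_triangle[of x w z] by simp
  have "0 < \<rho> / 2"
    using \<open>0 < \<rho>\<close> by simp
  obtain T y where y: "0 < T" "y 0 = x" "M-lipschitz_on {-T..T} y"
      "\<And>t w. t \<in> {-T<..<T} - {0} \<Longrightarrow> (y has_vector_derivative w) (at t) \<Longrightarrow>
        w \<in> krasovskii_regularization (Filippov G) (y t)"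
  proof (rule bounded_inclusion_solution[where x=x and \<Phi>="Filippov G" and \<rho>="\<rho> / 2" and M=M])
    show "Filippov G z \<noteq> {}" if "z \<in> cball x (\<rho> / 2)" for z
      using Filippov_nonempty[OF \<open>0 < \<rho> / 2\<close>] bounded near[OF that] by blast
    show "norm w \<le> M" if "z \<in> cball x (\<rho> / 2)" "w \<in> Filippov G z" for z w
      using Filippov_norm_le[OF \<open>0 < \<rho> / 2\<close> _ that(2)] bounded near[OF that(1)] by blast
  qed (use \<open>0 < \<rho> / 2\<close> in blast)+
  obtain N where N: "negligible N" "\<And>t. t \<in> {-T<..<T} - N \<Longrightarrow> y differentiable (at t)"
    using lipschitz_on_differentiable_ae[OF y(3)] by blast
  have "absolutely_continuous_fun {-T<..<T} y"
    using y(3)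
    by (intro lipschitz_on_imp_absolutely_continuous_fun[of M]) (auto intro: lipschitz_on_subset)
  moreover have "AE t in lebesgue. t \<in> {-T<..<T} \<longrightarrow>
      (\<exists>v. (y has_vector_derivative v) (at t) \<and> v \<in> Filippov G (y t))"
  proof (rule AE_I'[of "N \<union> {0}"])
    show "N \<union> {0} \<in> null_sets lebesgue"
      using N(1) by (simp add: negligible_iff_null_sets[symmetric])
    show "{t \<in> space lebesgue. \<not> (t \<in> {-T<..<T} \<longrightarrow>
        (\<exists>v. (y has_vector_derivative v) (at t) \<and> v \<in> Filippov G (y t)))} \<subseteq> N \<union> {0}"
      using N(2) y(4) krasovskii_regularization_Filippov_subset vector_derivative_works by blast
  qed
  ultimately show ?thesis
    using y(1,2) unfolding Filippov_solution_def by blast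
qed

theorem proposition4p5:
  fixes f :: "(real^('n::finite)) \<times> (real^('m::finite)) \<Rightarrow> real"
    and g :: "(real^'n) \<times> (real^'m) \<Rightarrow> real^('p::finite)"
    and F :: "(real^'n) \<times> (real^'m) \<Rightarrow> real^'n"
  assumes "C2 f" and "C2 g"
    and "\<And>x. strictly_convex_on UNIV (\<lambda>u. f (x, u))"
    and "\<And>x i. convex_on UNIV (\<lambda>u. g (x, u) $ i)"
    and "\<And>x. \<exists>u. is_minimizer f g x u"
    and "\<And>x. local_compact_feasibility g x"
    and "locally_lipschitz F"
  shows "\<forall>x. \<exists>\<delta>>0. \<exists>y. Filippov_solution (\<lambda>z. F (z, ustar f g z)) {-\<delta><..<\<delta>} y \<and> y 0 = x"
proof
  fix x :: "real^'n"
  have min: "is_minimizer f g z (ustar f g z)" for z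
    using assms(3-5) by (rule is_minimizer_ustar)
  obtain \<rho> R where "0 < \<rho>" and R: "\<And>z. z \<in> cball x \<rho> \<Longrightarrow> norm (ustar f g z) \<le> R"
    using minimizers_locally_bounded[OF C2_imp_continuous_on[OF assms(1)]
        C2_imp_continuous_on[OF assms(2)] assms(3,4) min assms(6)] by blast
  have "compact (F ` (cball x \<rho> \<times> cball 0 R))"
    using locally_lipschitz_imp_continuous_on[OF assms(7)]
    by (intro compact_continuous_image compact_Times) (auto intro: continuous_on_subset)
  then obtain M where M: "\<forall>v\<in>F ` (cball x \<rho> \<times> cball 0 R). norm v \<le> M"
    using compact_imp_bounded bounded_iff by metis
  have "norm (F (z, ustar f g z)) \<le> M" if "z \<in> cball x \<rho>" for z
    using M R[OF that] that by simp
  then show "\<exists>\<delta>>0. \<exists>y. Filippov_solution (\<lambda>z. F (z, ustar f g z)) {-\<delta><..<\<delta>} y \<and> y 0 = x"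
    by (rule Filippov_solution_exists_locally_bounded[OF \<open>0 < \<rho>\<close>])
qed

end
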